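(* If $\Gamma$ is a neat subgroup of $\Phi$, then $\Gamma_X$ acts trivially on $X$, i.e. every element of $\Gamma_X$ fixes $X$ pointwise ($\Gamma'_X=\Gamma_X$).
   Context: $\mathbb K$ is a totally real number field with real embeddings $\lambda_1,\dots,\lambda_r$; $\underline V$ a $\mathbb K$-vector space with nondegenerate symmetric bilinear form of signature $(p,q)$ at $\lambda_1$ and positive definite at all other embeddings; $L\subset\underline V$ an integral lattice; $\Phi$ the group of $\mathbb K$-rational isometries of determinant one preserving $L$. An element $g$ is neat if the subgroup of $\mathbb C^*$ generated by its eigenvalues is torsion free; a subgroup is neat if all its elements are. $\underline X\subset\underline V$ is a $\mathbb K$-subspace such that $(\,,\,)$ restricted to the completion $X$ of $\underline X$ at $\lambda_1$ is positive definite (and $\underline X$ is nondegenerate at every place); $\Gamma_X$ is the stabilizer of $X$ in $\Gamma$ and $\Gamma'_X$ the subgroup acting trivially on $X$. *)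

theory Defs
  imports "HOL-Computational_Algebra.Polynomial" "Jordan_Normal_Form.Char_Poly"
begin

section \<open>Totally real number fields (embedded in the reals via the distinguished embedding)\<close>

definition subfield_real :: "real set \<Rightarrow> bool" where
  "subfield_real K \<longleftrightarrow> 0 \<in> K \<and> 1 \<in> K \<and>
     (\<forall>x\<in>K. \<forall>y\<in>K. x + y \<in> K \<and> x - y \<in> K \<and> x * y \<in> K) \<and>
     (\<forall>x\<in>K. x \<noteq> 0 \<longrightarrow> inverse x \<in> K)"

definition number_field_real :: "real set \<Rightarrow> bool" where
  "number_field_real K \<longleftrightarrow> subfield_real K \<and>
     (\<exists>(d::nat) (b::nat \<Rightarrow> real). (\<forall>i<d. b i \<in> K) \<and>
        (\<forall>x\<in>K. \<exists>c. (\<forall>i<d. c i \<in> \<rat>) \<and> x = (\<Sum>i<d. c i * b i)))"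

definition field_embedding :: "real set \<Rightarrow> (real \<Rightarrow> complex) \<Rightarrow> bool" where
  "field_embedding K \<sigma> \<longleftrightarrow> \<sigma> 1 = 1 \<and>
     (\<forall>x\<in>K. \<forall>y\<in>K. \<sigma> (x + y) = \<sigma> x + \<sigma> y \<and> \<sigma> (x * y) = \<sigma> x * \<sigma> y)"

definition totally_real :: "real set \<Rightarrow> bool" where
  "totally_real K \<longleftrightarrow> number_field_real K \<and>
     (\<forall>\<sigma>. field_embedding K \<sigma> \<longrightarrow> (\<forall>x\<in>K. \<sigma> x \<in> \<real>))"

text \<open>Real embeddings K \<rightarrow> R; the distinguished one (lambda_1) is the inclusion.\<close>
definition real_embedding :: "real set \<Rightarrow> (real \<Rightarrow> real) \<Rightarrow> bool" where
  "real_embedding K \<sigma> \<longleftrightarrow> field_embedding K (\<lambda>x. complex_of_real (\<sigma> x))"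

definition ring_of_integers :: "real set \<Rightarrow> real set" where
  "ring_of_integers K = {x \<in> K. algebraic_int x}"

definition Kvecs :: "real set \<Rightarrow> nat \<Rightarrow> real vec set" where
  "Kvecs K n = {v \<in> carrier_vec n. \<forall>i<n. v $ i \<in> K}"

definition bil :: "real mat \<Rightarrow> real vec \<Rightarrow> real vec \<Rightarrow> real" where
  "bil B x y = x \<bullet> (B *\<^sub>v y)"

definition lincomb_vec :: "nat \<Rightarrow> nat \<Rightarrow> (nat \<Rightarrow> real) \<Rightarrow> (nat \<Rightarrow> real vec) \<Rightarrow> real vec" where
  "lincomb_vec n m c xs = vec n (\<lambda>i. \<Sum>j<m. c j * (xs j $ i))"

definition span_with :: "real set \<Rightarrow> nat \<Rightarrow> real vec set \<Rightarrow> real vec set" where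
  "span_with S n A = {lincomb_vec n m c xs | m c xs.
      (\<forall>j<m. c j \<in> S) \<and> (\<forall>j<m. xs j \<in> A)}"

definition admissible_form :: "real set \<Rightarrow> nat \<Rightarrow> real mat \<Rightarrow> bool" where
  "admissible_form K n B \<longleftrightarrow>
     B \<in> carrier_mat n n \<and> transpose_mat B = B \<and> (\<forall>i<n. \<forall>j<n. B $$ (i,j) \<in> K) \<and>
     \<comment> \<open>nondegenerate (at lambda_1, hence signature (p,q) with p+q=n)\<close>
     (\<forall>x\<in>Kvecs K n. (\<forall>y\<in>Kvecs K n. bil B x y = 0) \<longrightarrow> x = 0\<^sub>v n) \<and>
     \<comment> \<open>positive definite at all other real embeddings\<close>
     (\<forall>\<sigma>. real_embedding K \<sigma> \<and> (\<exists>x\<in>K. \<sigma> x \<noteq> x) \<longrightarrow>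
        (\<forall>x\<in>carrier_vec n. x \<noteq> 0\<^sub>v n \<longrightarrow> bil (map_mat \<sigma> B) x x > 0))"

definition integral_lattice :: "real set \<Rightarrow> nat \<Rightarrow> real mat \<Rightarrow> real vec set \<Rightarrow> bool" where
  "integral_lattice K n B L \<longleftrightarrow>
     (\<exists>(m::nat) gs. (\<forall>j<m. gs j \<in> Kvecs K n) \<and>
        L = span_with (ring_of_integers K) n (gs ` {..<m}) \<and>
        Kvecs K n = span_with K n (gs ` {..<m})) \<and>
     (\<forall>x\<in>L. \<forall>y\<in>L. bil B x y \<in> ring_of_integers K)"

definition Phi :: "real set \<Rightarrow> nat \<Rightarrow> real mat \<Rightarrow> real vec set \<Rightarrow> real mat set" where
  "Phi K n B L = {g \<in> carrier_mat n n. (\<forall>i<n. \<forall>j<n. g $$ (i,j) \<in> K) \<and>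
       transpose_mat g * B * g = B \<and> det g = 1 \<and> (\<lambda>v. g *\<^sub>v v) ` L = L}"

definition is_subgroup_of :: "nat \<Rightarrow> real mat set \<Rightarrow> real mat set \<Rightarrow> bool" where
  "is_subgroup_of n G H \<longleftrightarrow> G \<subseteq> H \<and> 1\<^sub>m n \<in> G \<and>
     (\<forall>g\<in>G. \<forall>h\<in>G. g * h \<in> G) \<and> (\<forall>g\<in>G. \<exists>h\<in>G. g * h = 1\<^sub>m n)"

definition mult_subgroup_gen :: "complex set \<Rightarrow> complex set" where
  "mult_subgroup_gen S = {prod_list (map (\<lambda>(s,k). s powi k) ks) | ks.
      \<forall>p\<in>set ks. fst p \<in> S}"

definition torsion_free_set :: "complex set \<Rightarrow> bool" where
  "torsion_free_set G \<longleftrightarrow> (\<forall>z\<in>G. \<forall>m::nat. m > 0 \<and> z ^ m = 1 \<longrightarrow> z = 1)"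

definition neat_elem :: "real mat \<Rightarrow> bool" where
  "neat_elem g \<longleftrightarrow>
     torsion_free_set (mult_subgroup_gen {k. eigenvalue (map_mat complex_of_real g) k})"

definition neat :: "real mat set \<Rightarrow> bool" where
  "neat G \<longleftrightarrow> (\<forall>g\<in>G. neat_elem g)"

definition K_subspace :: "real set \<Rightarrow> nat \<Rightarrow> real vec set \<Rightarrow> bool" where
  "K_subspace K n X \<longleftrightarrow> X \<subseteq> Kvecs K n \<and> 0\<^sub>v n \<in> X \<and>
     (\<forall>x\<in>X. \<forall>y\<in>X. x + y \<in> X) \<and> (\<forall>c\<in>K. \<forall>x\<in>X. c \<cdot>\<^sub>v x \<in> X)"

text \<open>Completion at lambda_1: the real span.\<close>
definition completion :: "nat \<Rightarrow> real vec set \<Rightarrow> real vec set" where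
  "completion n X = span_with UNIV n X"

definition stab :: "real mat set \<Rightarrow> real vec set \<Rightarrow> real mat set" where
  "stab G Y = {g \<in> G. (\<lambda>v. g *\<^sub>v v) ` Y = Y}"

definition pointwise_stab :: "real mat set \<Rightarrow> real vec set \<Rightarrow> real mat set" where
  "pointwise_stab G Y = {g \<in> G. \<forall>v\<in>Y. g *\<^sub>v v = v}"

end

theory Submission
  imports Defs "HOL-Library.Function_Algebras"
begin

text \<open>Let \<open>g \<in> \<Gamma>\<close> stabilise \<open>X\<close>. A \<open>\<real>\<close>-spanning set of \<open>X\<close> consists of \<open>K\<close>-rational vectors
  \<open>x\<close>, and some integer multiple \<open>w = D x\<close> lies in the lattice \<open>L\<close>. The \<open>g\<close>-orbit of \<open>w\<close> stays
  in \<open>L \<inter> X\<close> on the level set \<open>(y, y) = (w, w)\<close>, and this set is finite: a vector of it is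
  determined by its pairings with finitely many fixed vectors of the set, and these pairings are
  algebraic integers of \<open>K\<close> all of whose conjugates are bounded, by Cauchy-Schwarz for the
  positive definite form on \<open>X\<close> at \<open>\<lambda>\<^sub>1\<close> and for the conjugate forms, positive definite by
  hypothesis, at the other embeddings. Hence \<open>g\<^sup>N w = w\<close> and \<open>g\<^sup>N x = x\<close> for some \<open>N > 0\<close>. If
  \<open>g x \<noteq> x\<close>, some nontrivial \<open>N\<close>-th root of unity would be an eigenvalue of \<open>g\<close>, which
  neatness forbids.\<close>

section \<open>Vectors and matrices\<close>

lemma smult_zero_vec_left [simp]: "(v :: 'a::comm_ring_1 vec) \<in> carrier_vec n \<Longrightarrow>
    0 \<cdot>\<^sub>v v = 0\<^sub>v n"
  by (rule eq_vecI) auto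

lemma smult_zero_vec_right [simp]: "(c :: 'a::comm_ring_1) \<cdot>\<^sub>v 0\<^sub>v n = 0\<^sub>v n"
  by (rule eq_vecI) auto

lemma mult_mat_zero_vec [simp]: "(A :: 'a::comm_ring_1 mat) \<in> carrier_mat n m \<Longrightarrow>
    A *\<^sub>v 0\<^sub>v m = 0\<^sub>v n"
  by (rule eq_vecI) (auto simp: row_def)

lemma mult_zero_mat_vec [simp]: "(v :: 'a::comm_ring_1 vec) \<in> carrier_vec m \<Longrightarrow>
    0\<^sub>m n m *\<^sub>v v = 0\<^sub>v n"
  by (rule eq_vecI) (auto simp: scalar_prod_def)

lemma smult_mat_mult_vec:
  "(A :: 'a::comm_ring_1 mat) \<in> carrier_mat n m \<Longrightarrow>
      v \<in> carrier_vec m \<Longrightarrow> (c \<cdot>\<^sub>m A) *\<^sub>v v = c \<cdot>\<^sub>v (A *\<^sub>v v)"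
  by (rule eq_vecI) (auto simp: scalar_prod_def sum_distrib_left mult.assoc)

lemma mult_mat_vec_smult:
  "(A :: 'a::comm_ring_1 mat) \<in> carrier_mat n m \<Longrightarrow>
      v \<in> carrier_vec m \<Longrightarrow> A *\<^sub>v (c \<cdot>\<^sub>v v) = c \<cdot>\<^sub>v (A *\<^sub>v v)"
  by (rule eq_vecI) (auto simp: scalar_prod_smult_right)

lemma mult_mat_vec_index_sum:
  "A \<in> carrier_mat n m \<Longrightarrow> v \<in> carrier_vec m \<Longrightarrow>
      i < n \<Longrightarrow> (A *\<^sub>v v) $ i = (\<Sum>l<m. A $$ (i,l) * v $ l)"
  by (simp add: scalar_prod_def lessThan_atLeast0)

lemma mult_mat_index_sum:
  "A \<in> carrier_mat n m \<Longrightarrow> B \<in> carrier_mat m k \<Longrightarrow>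
      i < n \<Longrightarrow> j < k \<Longrightarrow>
    (A * B) $$ (i,j) = (\<Sum>l<m. A $$ (i,l) * B $$ (l,j))"
  by (simp add: scalar_prod_def lessThan_atLeast0)

lemma smult_vec_right_cancel:
  assumes "(c :: 'a::field) \<cdot>\<^sub>v v = d \<cdot>\<^sub>v v" and "v \<in> carrier_vec n"
    and "v \<noteq> 0\<^sub>v n"
  shows "c = d"
proof -
  obtain i where "i < n" "v $ i \<noteq> 0"
    using assms(2,3) by (metis eq_vecI carrier_vecD index_zero_vec(1,2))
  then show ?thesis using arg_cong[OF assms(1), of "\<lambda>u. u $ i"] assms(2) by simp
qed

lemma smult_vec_left_cancel:
  "(r :: 'a::field) \<noteq> 0 \<Longrightarrow> a \<in> carrier_vec n \<Longrightarrow>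
      b \<in> carrier_vec n \<Longrightarrow> r \<cdot>\<^sub>v a = r \<cdot>\<^sub>v b \<Longrightarrow> a = b"
  by (auto simp: vec_eq_iff)

lemma minus_vec_eq_zero_imp_eq:
  "(u :: 'a::ab_group_add vec) \<in> carrier_vec n \<Longrightarrow>
      v \<in> carrier_vec n \<Longrightarrow> u - v = 0\<^sub>v n \<Longrightarrow> u = v"
  by (auto simp: vec_eq_iff)

lemma funpow_mult_mat_vec_carrier:
  "g \<in> carrier_mat n n \<Longrightarrow> w \<in> carrier_vec n \<Longrightarrow>
      ((\<lambda>v. g *\<^sub>v v) ^^ k) w \<in> carrier_vec n"
  by (induction k) auto

definition vec_subspace :: "nat \<Rightarrow> 'a::comm_ring_1 vec set \<Rightarrow> bool" where
  "vec_subspace n W \<longleftrightarrow> W \<subseteq> carrier_vec n \<and>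
      (\<forall>u\<in>W. \<forall>v\<in>W. u + v \<in> W) \<and> (\<forall>c. \<forall>v\<in>W. c \<cdot>\<^sub>v v \<in> W)"

lemma vec_subspace_carrier_vec: "vec_subspace n (carrier_vec n)"
  by (auto simp: vec_subspace_def)

lemma vec_subspaceD:
  assumes "vec_subspace n W"
  shows "W \<subseteq> carrier_vec n"
    and "u \<in> W \<Longrightarrow> v \<in> W \<Longrightarrow> u + v \<in> W"
    and "v \<in> W \<Longrightarrow> c \<cdot>\<^sub>v v \<in> W"
  using assms by (auto simp: vec_subspace_def)

lemma vec_subspace_diff:
  assumes W: "vec_subspace n W" and "u \<in> W" "v \<in> W"
  shows "u - v \<in> W"
proof -
  have "u - v = u + (-1) \<cdot>\<^sub>v v"
    using assms vec_subspaceD(1)[OF W] by (intro eq_vecI) auto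
  then show ?thesis using assms vec_subspaceD[OF W] by metis
qed

lemma funpow_mult_mat_vec_smult:
  fixes g :: "'a::comm_ring_1 mat"
  assumes g: "g \<in> carrier_mat n n" and v: "v \<in> carrier_vec n"
  shows "((\<lambda>v. g *\<^sub>v v) ^^ k) (r \<cdot>\<^sub>v v) =
      r \<cdot>\<^sub>v ((\<lambda>v. g *\<^sub>v v) ^^ k) v"
proof (induction k)
  case (Suc k)
  have "((\<lambda>v. g *\<^sub>v v) ^^ k) v \<in> carrier_vec n" by (rule funpow_mult_mat_vec_carrier[OF g v])
  with Suc show ?case using g by (simp add: mult_mat_vec_smult)
qed simp

lemma sum_lessThan_add_split: "(\<Sum>j<(a::nat)+b. f j) = (\<Sum>j<a. f j) + (\<Sum>j<b. f (a + j))"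
  by (induction b) (auto simp: add.assoc)

lemma lincomb_carrier[simp]: "lincomb_vec n m c xs \<in> carrier_vec n"
  by (simp add: lincomb_vec_def)

lemma lincomb_index: "i < n \<Longrightarrow> lincomb_vec n m c xs $ i = (\<Sum>j<m. c j * (xs j $ i))"
  by (simp add: lincomb_vec_def)

lemma lincomb_add: "lincomb_vec n m1 c1 xs1 + lincomb_vec n m2 c2 xs2 =
  lincomb_vec n (m1 + m2) (\<lambda>j. if j < m1 then c1 j else c2 (j - m1)) (\<lambda>j. if j < m1 then xs1 j else xs2 (j - m1))"
  by (rule eq_vecI) (auto simp: lincomb_vec_def sum_lessThan_add_split)

lemma lincomb_smult: "r \<cdot>\<^sub>v lincomb_vec n m c xs = lincomb_vec n m (\<lambda>j. r * c j) xs"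
  by (rule eq_vecI) (auto simp: lincomb_vec_def sum_distrib_left mult.assoc)

lemma mult_mat_lincomb_vec: assumes g: "g \<in> carrier_mat n n"
  and xs: "\<And>j. j < m \<Longrightarrow> xs j \<in> carrier_vec n"
  shows "g *\<^sub>v lincomb_vec n m c xs = lincomb_vec n m c (\<lambda>j. g *\<^sub>v xs j)"
proof (rule eq_vecI)
  fix i assume "i < dim_vec (lincomb_vec n m c (\<lambda>j. g *\<^sub>v xs j))"
  then have i: "i < n" by (simp add: lincomb_vec_def)
  have "(g *\<^sub>v lincomb_vec n m c xs) $ i = (\<Sum>k<n. g $$ (i,k) * (\<Sum>j<m. c j * (xs j $ k)))"
    using g i by (simp add: scalar_prod_def lessThan_atLeast0 lincomb_vec_def)
  also have "\<dots> = (\<Sum>j<m. c j * (\<Sum>k<n. g $$ (i,k) * (xs j $ k)))"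
    by (simp add: sum_distrib_left sum.swap[of _ "{..<n}" "{..<m}"] mult.left_commute)
  also have "\<dots> = (\<Sum>j<m. c j * ((g *\<^sub>v xs j) $ i))"
  proof (intro sum.cong refl)
    fix j assume "j \<in> {..<m}"
    then have "xs j \<in> carrier_vec n" using xs by simp
    then show "c j * (\<Sum>k<n. g $$ (i,k) * (xs j $ k)) = c j * ((g *\<^sub>v xs j) $ i)"
      using mult_mat_vec_index_sum[OF g _ i] by simp
  qed
  finally show "(g *\<^sub>v lincomb_vec n m c xs) $ i = lincomb_vec n m c (\<lambda>j. g *\<^sub>v xs j) $ i"
    using i by (simp add: lincomb_vec_def)
qed (use g in \<open>auto simp: lincomb_vec_def\<close>)

lemma vec_subspace_completion: "vec_subspace n (completion n A)"
  unfolding vec_subspace_def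
proof (intro conjI ballI allI)
  show "completion n A \<subseteq> carrier_vec n" by (auto simp: completion_def span_with_def)
next
  fix u v assume "u \<in> completion n A" "v \<in> completion n A"
  then obtain m1 c1 xs1 m2 c2 xs2
    where u: "u = lincomb_vec n m1 c1 xs1" "\<forall>j<m1. xs1 j \<in> A"
      and v: "v = lincomb_vec n m2 c2 xs2" "\<forall>j<m2. xs2 j \<in> A"
    unfolding completion_def span_with_def by blast
  show "u + v \<in> completion n A"
    unfolding completion_def span_with_def u(1) v(1) lincomb_add
    using u v by (intro CollectI exI conjI[OF refl]) auto
next
  fix c v assume "v \<in> completion n A"
  then obtain m cs xs where v: "v = lincomb_vec n m cs xs" "\<forall>j<m. xs j \<in> A"
    unfolding completion_def span_with_def by blast
  have "c \<cdot>\<^sub>v v = lincomb_vec n m (\<lambda>j. c * cs j) xs" unfolding v(1) lincomb_smult ..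
  then show "c \<cdot>\<^sub>v v \<in> completion n A" unfolding completion_def span_with_def using v(2) by blast
qed

lemma subset_completion: "A \<subseteq> carrier_vec n \<Longrightarrow> A \<subseteq> completion n A"
proof
  fix x assume "A \<subseteq> carrier_vec n" "x \<in> A"
  then have "x = lincomb_vec n 1 (\<lambda>_. 1) (\<lambda>_. x)" by (intro eq_vecI) (auto simp: lincomb_vec_def)
  then show "x \<in> completion n A" unfolding completion_def span_with_def using \<open>x \<in> A\<close> by blast
qed

lemma mult_mat_vec_fixes_completion:
  assumes g: "g \<in> carrier_mat n n" and A: "A \<subseteq> carrier_vec n"
    and fixed: "\<forall>x\<in>A. g *\<^sub>v x = x"
    and v: "v \<in> completion n A"
  shows "g *\<^sub>v v = v"
proof -
  obtain m c xs where v: "v = lincomb_vec n m c xs" and xs: "\<forall>j<m. xs j \<in> A"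
    using v unfolding completion_def span_with_def by blast
  have "g *\<^sub>v v = lincomb_vec n m c (\<lambda>j. g *\<^sub>v xs j)"
    unfolding v by (rule mult_mat_lincomb_vec[OF g]) (use xs A in auto)
  also have "\<dots> = v" unfolding v using xs fixed by (intro eq_vecI) (auto simp: lincomb_vec_def)
  finally show ?thesis .
qed

section \<open>Polynomials acting on vectors\<close>

text \<open>\<open>poly_mat_vec A p w\<close> is \<open>p(A) w\<close>.\<close>

definition poly_mat_vec :: "'a::comm_ring_1 mat \<Rightarrow> 'a poly \<Rightarrow> 'a vec \<Rightarrow> 'a vec" where
  "poly_mat_vec A p w = foldr (\<lambda>a v. a \<cdot>\<^sub>v w + A *\<^sub>v v) (coeffs p) (0\<^sub>v (dim_vec w))"

context
  fixes A :: "'a::comm_ring_1 mat" and N :: nat and w :: "'a vec"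
  assumes A: "A \<in> carrier_mat N N" and w: "w \<in> carrier_vec N"
begin

lemma poly_mat_vec_carrier [simp]: "poly_mat_vec A p w \<in> carrier_vec N"
proof -
  have "foldr (\<lambda>a v. a \<cdot>\<^sub>v w + A *\<^sub>v v) cs (0\<^sub>v (dim_vec w)) \<in> carrier_vec N" for cs
    by (induction cs) (use A w in auto)
  then show ?thesis unfolding poly_mat_vec_def .
qed

lemma poly_mat_vec_0 [simp]: "poly_mat_vec A 0 w = 0\<^sub>v N"
  using w by (simp add: poly_mat_vec_def)

lemma poly_mat_vec_pCons: "poly_mat_vec A (pCons a p) w = a \<cdot>\<^sub>v w + A *\<^sub>v poly_mat_vec A p w"
proof (cases "p = 0 \<and> a = 0")
  case True
  then show ?thesis using A w by auto
next
  case False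
  then have "coeffs (pCons a p) = a # coeffs p" by (auto simp: cCons_def)
  then show ?thesis unfolding poly_mat_vec_def by simp
qed

lemma poly_mat_vec_const: "poly_mat_vec A [:c:] w = c \<cdot>\<^sub>v w"
  using A w by (simp add: poly_mat_vec_pCons)

lemma poly_mat_vec_1: "poly_mat_vec A 1 w = w"
  using poly_mat_vec_const[of 1] w by (simp add: one_pCons)

lemma poly_mat_vec_add: "poly_mat_vec A (p + q) w = poly_mat_vec A p w + poly_mat_vec A q w"
proof (induction p arbitrary: q rule: pCons_induct)
  case 0
  then show ?case using A w by simp
next
  case (pCons a p)
  obtain b q' where q: "q = pCons b q'" by (cases q) auto
  have "poly_mat_vec A (pCons a p + q) w
      = (a + b) \<cdot>\<^sub>v w + A *\<^sub>v (poly_mat_vec A p w + poly_mat_vec A q' w)"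
    by (simp add: q poly_mat_vec_pCons pCons.IH)
  also have "\<dots> = (a \<cdot>\<^sub>v w + A *\<^sub>v poly_mat_vec A p w)
      + (b \<cdot>\<^sub>v w + A *\<^sub>v poly_mat_vec A q' w)"
    using A w by (simp add: mult_add_distrib_mat_vec add_smult_distrib_vec)
      (rule eq_vecI, auto simp: algebra_simps)
  finally show ?case by (simp add: q poly_mat_vec_pCons)
qed

lemma poly_mat_vec_smult: "poly_mat_vec A (Polynomial.smult c p) w = c \<cdot>\<^sub>v poly_mat_vec A p w"
proof (induction p rule: pCons_induct)
  case 0
  then show ?case using w by simp
next
  case (pCons a p)
  have "A *\<^sub>v (c \<cdot>\<^sub>v poly_mat_vec A p w) = c \<cdot>\<^sub>v (A *\<^sub>v poly_mat_vec A p w)"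
    by (rule mult_mat_vec_smult[OF A poly_mat_vec_carrier])
  then show ?case using A w
    by (simp add: poly_mat_vec_pCons pCons.IH smult_add_distrib_vec[of _ N] smult_smult_assoc)
qed

end

lemma poly_mat_vec_mult:
  assumes A: "A \<in> carrier_mat N N" and w: "w \<in> carrier_vec N"
  shows "poly_mat_vec A (p * q) w = poly_mat_vec A p (poly_mat_vec A q w)"
proof (induction p rule: pCons_induct)
  case 0
  then show ?case using A w by simp
next
  case (pCons a p)
  have qw: "poly_mat_vec A q w \<in> carrier_vec N" using A w by simp
  have "poly_mat_vec A (pCons a p * q) w = poly_mat_vec A (Polynomial.smult a q + pCons 0 (p * q)) w"
    by simp
  also have "\<dots> = a \<cdot>\<^sub>v poly_mat_vec A q w + A *\<^sub>v poly_mat_vec A p (poly_mat_vec A q w)"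
    using A w by (simp add: poly_mat_vec_add poly_mat_vec_smult poly_mat_vec_pCons pCons.IH)
  also have "\<dots> = poly_mat_vec A (pCons a p) (poly_mat_vec A q w)"
    using A qw by (simp add: poly_mat_vec_pCons)
  finally show ?case .
qed

lemma poly_mat_vec_monom:
  assumes A: "A \<in> carrier_mat N N" and w: "w \<in> carrier_vec N"
  shows "poly_mat_vec A (monom 1 k) w = ((\<lambda>v. A *\<^sub>v v) ^^ k) w"
proof (induction k)
  case 0
  then show ?case using A w by (simp add: poly_mat_vec_const monom_0)
next
  case (Suc k)
  have "monom (1::'a) (Suc k) = pCons 0 (monom 1 k)" by (simp add: monom_Suc)
  then show ?case
    using A w funpow_mult_mat_vec_carrier[OF A w, of k] by (simp add: poly_mat_vec_pCons Suc)
qed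

lemma poly_mat_vec_invariant_subspace:
  assumes A: "A \<in> carrier_mat N N" and W: "vec_subspace N W"
    and inv: "\<And>v. v \<in> W \<Longrightarrow> A *\<^sub>v v \<in> W" and "w \<in> W"
  shows "poly_mat_vec A p w \<in> W"
proof (induction p rule: pCons_induct)
  case 0
  have "0 \<cdot>\<^sub>v w \<in> W" by (rule vec_subspaceD(3)[OF W \<open>w \<in> W\<close>])
  then show ?case using A \<open>w \<in> W\<close> vec_subspaceD(1)[OF W] by auto
next
  case (pCons a p)
  have "w \<in> carrier_vec N" using \<open>w \<in> W\<close> vec_subspaceD(1)[OF W] by auto
  then show ?case
    using pCons.IH \<open>w \<in> W\<close> by (simp add: poly_mat_vec_pCons[OF A] vec_subspaceD[OF W] inv)
qed

text \<open>If a product of linear factors kills a nonzero vector of an invariant subspace,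
  peeling off the factors one at a time produces an eigenvector in that subspace.\<close>

lemma linear_factors_annihilate_imp_eigenvector:
  fixes A :: "'a::field mat"
  assumes A: "A \<in> carrier_mat N N" and W: "vec_subspace N W"
    and inv: "\<And>v. v \<in> W \<Longrightarrow> A *\<^sub>v v \<in> W"
  shows "w \<in> W \<Longrightarrow> w \<noteq> 0\<^sub>v N \<Longrightarrow>
      poly_mat_vec A (\<Prod>\<rho>\<leftarrow>rs. [:-\<rho>, 1:]) w = 0\<^sub>v N \<Longrightarrow>
    \<exists>\<zeta>\<in>set rs. \<exists>v\<in>W. v \<noteq> 0\<^sub>v N \<and> A *\<^sub>v v = \<zeta> \<cdot>\<^sub>v v"
proof (induction rs arbitrary: w)
  case Nil
  then show ?case using vec_subspaceD(1)[OF W] by (auto simp: poly_mat_vec_1[OF A])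
next
  case (Cons r rs)
  have w: "w \<in> carrier_vec N" using Cons.prems(1) vec_subspaceD(1)[OF W] by auto
  define u where "u = poly_mat_vec A (\<Prod>\<rho>\<leftarrow>rs. [:-\<rho>, 1:]) w"
  have uW: "u \<in> W"
    unfolding u_def by (rule poly_mat_vec_invariant_subspace[OF A W inv Cons.prems(1)])
  have u: "u \<in> carrier_vec N" using uW vec_subspaceD(1)[OF W] by auto
  show ?case
  proof (cases "u = 0\<^sub>v N")
    case True
    then show ?thesis using Cons.IH[OF Cons.prems(1,2)] by (auto simp: u_def)
  next
    case False
    have "0\<^sub>v N = poly_mat_vec A ([:-r, 1:] * (\<Prod>\<rho>\<leftarrow>rs. [:-\<rho>, 1:])) w"
      using Cons.prems(3) by simp
    also have "\<dots> = (-r) \<cdot>\<^sub>v u + A *\<^sub>v u"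
      unfolding poly_mat_vec_mult[OF A w] u_def[symmetric]
      using A u by (simp add: poly_mat_vec_pCons poly_mat_vec_const)
    finally have "A *\<^sub>v u = r \<cdot>\<^sub>v u"
      using A u by (auto simp: vec_eq_iff algebra_simps)
    then show ?thesis using uW False by auto
  qed
qed

section \<open>Periodic points of neat elements\<close>

lemma finite_orbit_imp_periodic:
  assumes inj: "inj_on f S" and f: "\<And>v. v \<in> S \<Longrightarrow> f v \<in> S" and w: "w \<in> S"
    and fin: "finite (range (\<lambda>k. (f ^^ k) w))"
  shows "\<exists>N>0. (f ^^ N) w = w"
proof -
  have S: "(f ^^ k) v \<in> S" if "v \<in> S" for k v
    using that by (induction k) (auto intro: f)
  have cancel: "u = v" if "u \<in> S" "v \<in> S" "(f ^^ i) u = (f ^^ i) v" for i u v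
    using that
  proof (induction i)
    case (Suc i)
    then show ?case using inj S by (auto dest: inj_onD)
  qed simp
  have "\<not> inj (\<lambda>k. (f ^^ k) w)"
    using fin finite_imageD by fastforce
  then obtain i j where "i \<noteq> j" "(f ^^ i) w = (f ^^ j) w"
    unfolding inj_def by blast
  then obtain a b where ab: "a < b" "(f ^^ a) w = (f ^^ b) w"
    by (cases "i < j") (auto simp: neq_iff)
  then have "(f ^^ a) w = (f ^^ a) ((f ^^ (b - a)) w)"
    by (metis funpow_add le_add_diff_inverse less_imp_le o_apply)
  then have "w = (f ^^ (b - a)) w" using cancel S w by blast
  then show ?thesis using ab(1) by (intro exI[of _ "b - a"]) auto
qed

lemma geometric_poly_mult_linear:
  "(\<Sum>i<N. monom 1 i) * [:-1, 1:] = monom (1::complex) N + Polynomial.smult (-1) 1"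
proof -
  have "poly ((\<Sum>i<N. monom 1 i) * [:-1, 1:]) = poly (monom (1::complex) N + Polynomial.smult (-1) 1)"
    by (rule ext) (simp add: poly_sum poly_monom power_diff_1_eq algebra_simps)
  then show ?thesis by (simp add: poly_eq_poly_eq_iff)
qed

text \<open>If \<open>u = A x - x \<noteq> 0\<close>, then \<open>1 + A + \<dots> + A\<^sup>N\<^sup>-\<^sup>1\<close> kills \<open>u\<close>; splitting
  \<open>1 + z + \<dots> + z\<^sup>N\<^sup>-\<^sup>1\<close> into linear factors yields an eigenvector for one of its roots.\<close>

lemma periodic_moved_point_imp_root_of_unity_eigenvalue:
  fixes A :: "complex mat"
  assumes A: "A \<in> carrier_mat n n" and x: "x \<in> carrier_vec n" and N: "N > 0"
    and periodic: "((\<lambda>v. A *\<^sub>v v) ^^ N) x = x" and moved: "A *\<^sub>v x \<noteq> x"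
  obtains \<zeta> where "eigenvalue A \<zeta>" "\<zeta> ^ N = 1" "\<zeta> \<noteq> 1"
proof -
  define u where "u = A *\<^sub>v x - x"
  have u: "u \<in> carrier_vec n" using A x by (simp add: u_def)
  have "u \<noteq> 0\<^sub>v n"
    using moved minus_vec_eq_zero_imp_eq[of "A *\<^sub>v x" n x] A x by (auto simp: u_def)
  have u_poly: "poly_mat_vec A [:-1, 1:] x = u"
    using A x unfolding u_def by (simp add: poly_mat_vec_pCons poly_mat_vec_const) (rule eq_vecI, auto)
  define f :: "complex poly" where "f = (\<Sum>i<N. monom 1 i)"
  have poly_f: "poly f z = (\<Sum>i<N. z ^ i)" for z by (simp add: f_def poly_sum poly_monom)
  have "poly_mat_vec A f u = poly_mat_vec A (f * [:-1, 1:]) x"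
    using poly_mat_vec_mult[OF A x, of f "[:-1, 1:]"] u_poly by simp
  also have "\<dots> = ((\<lambda>v. A *\<^sub>v v) ^^ N) x + (-1) \<cdot>\<^sub>v x"
    unfolding f_def geometric_poly_mult_linear
    by (simp add: poly_mat_vec_add[OF A x] poly_mat_vec_monom[OF A x] poly_mat_vec_const[OF A x])
  also have "\<dots> = 0\<^sub>v n"
    unfolding periodic using x by (intro eq_vecI) auto
  finally have fu: "poly_mat_vec A f u = 0\<^sub>v n" .
  obtain rs where rs: "Polynomial.smult (lead_coeff f) (\<Prod>\<rho>\<leftarrow>rs. [:-\<rho>, 1:]) = f"
    using fundamental_theorem_algebra_factorized by blast
  have "poly f 1 = of_nat N" by (simp add: poly_f)
  then have f1: "poly f 1 \<noteq> 0" and lc: "lead_coeff f \<noteq> 0" using N by auto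
  have "lead_coeff f \<cdot>\<^sub>v poly_mat_vec A (\<Prod>\<rho>\<leftarrow>rs. [:-\<rho>, 1:]) u
      = poly_mat_vec A (Polynomial.smult (lead_coeff f) (\<Prod>\<rho>\<leftarrow>rs. [:-\<rho>, 1:])) u"
    by (rule poly_mat_vec_smult[OF A u, symmetric])
  also have "\<dots> = lead_coeff f \<cdot>\<^sub>v 0\<^sub>v n"
    unfolding rs fu by simp
  finally have "poly_mat_vec A (\<Prod>\<rho>\<leftarrow>rs. [:-\<rho>, 1:]) u = 0\<^sub>v n"
    by (rule smult_vec_left_cancel[OF lc poly_mat_vec_carrier[OF A u] zero_carrier_vec])
  then obtain \<zeta> v where \<zeta>: "\<zeta> \<in> set rs"
    and v: "v \<in> carrier_vec n" "v \<noteq> 0\<^sub>v n" "A *\<^sub>v v = \<zeta> \<cdot>\<^sub>v v"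
    using linear_factors_annihilate_imp_eigenvector[OF A vec_subspace_carrier_vec
        mult_mat_vec_carrier[OF A] u \<open>u \<noteq> 0\<^sub>v n\<close>] by blast
  have "poly f \<zeta> = 0"
    using linear_poly_root[OF \<zeta>] arg_cong[OF rs, of "\<lambda>p. poly p \<zeta>"] by simp
  then have "\<zeta> ^ N = 1" "\<zeta> \<noteq> 1"
    using power_diff_1_eq[of \<zeta> N] poly_f[of \<zeta>] f1 by auto
  moreover have "eigenvalue A \<zeta>"
    unfolding eigenvalue_def eigenvector_def using v A by auto
  ultimately show ?thesis using that by blast
qed

lemma neat_elem_periodic_point_fixed:
  fixes g :: "real mat"
  assumes g: "g \<in> carrier_mat n n" and neat: "neat_elem g" and x: "x \<in> carrier_vec n"
    and N: "N > 0" and periodic: "((\<lambda>v. g *\<^sub>v v) ^^ N) x = x"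
  shows "g *\<^sub>v x = x"
proof (rule ccontr)
  assume moved: "g *\<^sub>v x \<noteq> x"
  define gc where "gc = map_mat complex_of_real g"
  define xc where "xc = map_vec complex_of_real x"
  have gc: "gc \<in> carrier_mat n n" and xc: "xc \<in> carrier_vec n"
    using g x by (auto simp: gc_def xc_def)
  have hom: "map_vec complex_of_real (g *\<^sub>v v) = gc *\<^sub>v map_vec complex_of_real v"
    if "v \<in> carrier_vec n" for v
    unfolding gc_def using of_real_hom.mult_mat_vec_hom[OF g that] by simp
  have "map_vec complex_of_real (((\<lambda>v. g *\<^sub>v v) ^^ k) x) = ((\<lambda>v. gc *\<^sub>v v) ^^ k) xc" for k
  proof (induction k)
    case (Suc k)
    then show ?case using hom[OF funpow_mult_mat_vec_carrier[OF g x, of k]] by simp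
  qed (simp add: xc_def)
  from this[of N] have "((\<lambda>v. gc *\<^sub>v v) ^^ N) xc = xc"
    unfolding periodic xc_def[symmetric] by (rule sym)
  moreover have "gc *\<^sub>v xc \<noteq> xc"
  proof
    assume "gc *\<^sub>v xc = xc"
    then have "map_vec complex_of_real (g *\<^sub>v x) = map_vec complex_of_real x"
      using hom[OF x] by (simp add: xc_def)
    then show False using moved of_real_hom.vec_hom_inj by blast
  qed
  ultimately obtain \<zeta> where "eigenvalue gc \<zeta>" "\<zeta> ^ N = 1" "\<zeta> \<noteq> 1"
    using periodic_moved_point_imp_root_of_unity_eigenvalue[OF gc xc N] by blast
  moreover have "\<zeta> \<in> mult_subgroup_gen {k. eigenvalue (map_mat complex_of_real g) k}"
    using \<open>eigenvalue gc \<zeta>\<close> unfolding mult_subgroup_gen_def gc_def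
    by (intro CollectI exI[of _ "[(\<zeta>, 1)]"]) auto
  ultimately show False
    using neat N unfolding neat_elem_def torsion_free_set_def by blast
qed

section \<open>Algebraic integers\<close>

lemma algebraic_int_of_int_mat_eigenvalue:
  fixes Z :: "int mat" and v :: "'a::field_char_0 vec"
  assumes Z: "Z \<in> carrier_mat N N" and v: "v \<in> carrier_vec N" and v0: "v \<noteq> 0\<^sub>v N"
    and eq: "map_mat of_int Z *\<^sub>v v = z \<cdot>\<^sub>v v"
  shows "algebraic_int z"
proof -
  have Zc: "map_mat of_int Z \<in> carrier_mat N N" using Z by simp
  have "eigenvector (map_mat of_int Z) v z" unfolding eigenvector_def using Z v v0 eq by auto
  hence "eigenvalue (map_mat of_int Z) z" unfolding eigenvalue_def by blast
  hence "poly (char_poly (map_mat of_int Z)) z = 0" using eigenvalue_root_char_poly[OF Zc] by auto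
  also have "char_poly (map_mat of_int Z) = map_poly of_int (char_poly Z)"
    by (rule of_int_hom.char_poly_hom[OF Z])
  finally have "poly (map_poly of_int (char_poly Z)) z = 0" .
  moreover have "lead_coeff (char_poly Z) = 1" using degree_monic_char_poly[OF Z] by simp
  ultimately show ?thesis by (auto simp: algebraic_int_altdef_ipoly)
qed

lemma algebraic_int_obtain_monic_poly:
  fixes x :: complex
  assumes "algebraic_int x"
  obtains p :: "int poly" where "lead_coeff p = 1" "poly (map_poly of_int p) x = 0" "degree p \<ge> 1"
proof -
  obtain p :: "int poly" where p: "poly (map_poly of_int p) x = 0" "lead_coeff p = 1"
    using assms by (auto simp: algebraic_int_altdef_ipoly)
  have "degree p \<noteq> 0"
  proof
    assume "degree p = 0"
    then have "p = [:1:]" using p(2)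
      by (metis leading_coeff_0_iff monom_0 monom_eq_1_iff one_pCons pCons_0_0 degree_0_id zero_neq_one)
    then show False using p(1) by simp
  qed
  then show ?thesis using that p by auto
qed

lemma sum_atLeastLessThan_shift: "sum f {(a::nat)..<a+s} = (\<Sum>j<s. f (a + j))"
  by (induction s) (auto simp: add.commute)

lemma sum_lessThan_mult_split: "(\<Sum>t<(r::nat)*s. f t) = (\<Sum>i<r. \<Sum>j<s. f (i*s+j))"
proof -
  have "(\<Sum>t<r*s. f t) = (\<Sum>i<r. sum f {i*s..<i*s+s})"
    by (rule sum.nat_group[symmetric])
  also have "\<dots> = (\<Sum>i<r. \<Sum>j<s. f (i*s+j))"
    by (rule sum.cong[OF refl], rule sum_atLeastLessThan_shift)
  finally show ?thesis .
qed

lemma mult_add_less_mult: "(i::nat) < r \<Longrightarrow> j < s \<Longrightarrow> i * s + j < r * s"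
proof -
  assume i: "i < r" and j: "j < s"
  have "i * s + j < i * s + s" using j by simp
  also have "\<dots> = Suc i * s" by simp
  also have "\<dots> \<le> r * s" using i by (intro mult_right_mono) auto
  finally show ?thesis .
qed

definition companion_row :: "int poly \<Rightarrow> nat \<Rightarrow> nat \<Rightarrow> int" where
  "companion_row p i0 i = (if i0 + 1 < degree p then (if i = i0 + 1 then 1 else 0) else - coeff p i)"

lemma companion_row_sum:
  fixes x :: complex
  assumes lc: "lead_coeff p = 1" and px: "poly (map_poly of_int p) x = 0" and i0: "i0 < degree p"
  shows "(\<Sum>i<degree p. of_int (companion_row p i0 i) * x ^ i) = x ^ (i0 + 1)"
proof (cases "i0 + 1 < degree p")
  case True
  then have "(\<Sum>i<degree p. of_int (companion_row p i0 i) * x ^ i)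
      = (\<Sum>i<degree p. if i = i0 + 1 then x ^ i else 0)"
    by (intro sum.cong) (auto simp: companion_row_def)
  also have "\<dots> = x ^ (i0 + 1)" using True by (subst sum.delta) auto
  finally show ?thesis .
next
  case False
  then have r: "degree p = i0 + 1" using i0 by auto
  have "0 = poly (map_poly of_int p) x" using px by simp
  also have "\<dots> = (\<Sum>i\<le>degree p. of_int (coeff p i) * x ^ i)"
    by (simp add: poly_altdef degree_map_poly coeff_map_poly)
  also have "\<dots> = (\<Sum>i<degree p. of_int (coeff p i) * x ^ i) + x ^ degree p"
    using lc by (simp add: lessThan_Suc_atMost[symmetric])
  finally have "x ^ degree p = - (\<Sum>i<degree p. of_int (coeff p i) * x ^ i)"
    by (simp add: eq_neg_iff_add_eq_0 add.commute)
  also have "\<dots> = (\<Sum>i<degree p. of_int (companion_row p i0 i) * x ^ i)"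
    using False by (simp add: companion_row_def sum_negf)
  finally show ?thesis using r by simp
qed

text \<open>The monomials \<open>x\<^sup>i y\<^sup>j\<close> (\<open>i < degree p\<close>, \<open>j < s\<close>), listed with index \<open>i * s + j\<close>, span a
  \<open>\<int>\<close>-module on which multiplication by a root \<open>x\<close> of \<open>p\<close> acts by the Kronecker product of the
  companion matrix of \<open>p\<close> with the identity; symmetrically for a root \<open>y\<close> of \<open>q\<close>.\<close>

definition monomial_vec :: "complex \<Rightarrow> complex \<Rightarrow> nat \<Rightarrow> nat \<Rightarrow> complex vec" where
  "monomial_vec x y r s = vec (r * s) (\<lambda>t. x ^ (t div s) * y ^ (t mod s))"

definition companion_kron_left :: "int poly \<Rightarrow> nat \<Rightarrow> int mat" where
  "companion_kron_left p s = mat (degree p * s) (degree p * s)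
     (\<lambda>(t, t'). if t' mod s = t mod s then companion_row p (t div s) (t' div s) else 0)"

definition companion_kron_right :: "nat \<Rightarrow> int poly \<Rightarrow> int mat" where
  "companion_kron_right r q = mat (r * degree q) (r * degree q)
     (\<lambda>(t, t'). if t' div degree q = t div degree q
        then companion_row q (t mod degree q) (t' mod degree q) else 0)"

lemma companion_kron_left_eigen:
  assumes lc: "lead_coeff p = 1" and root: "poly (map_poly of_int p) x = 0"
  shows "map_mat of_int (companion_kron_left p s) *\<^sub>v monomial_vec x y (degree p) s
    = x \<cdot>\<^sub>v monomial_vec x y (degree p) s"
    (is "?M *\<^sub>v ?v = _")
proof (rule eq_vecI)
  fix t assume "t < dim_vec (x \<cdot>\<^sub>v ?v)"
  then have t: "t < degree p * s" by (simp add: monomial_vec_def)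
  define i0 where "i0 = t div s"
  define j0 where "j0 = t mod s"
  have s: "s > 0" using t by (cases s) auto
  have i0: "i0 < degree p" using t unfolding i0_def by (simp add: less_mult_imp_div_less)
  have j0: "j0 < s" using s unfolding j0_def by simp
  have "(?M *\<^sub>v ?v) $ t = (\<Sum>t'<degree p * s. ?M $$ (t,t') * ?v $ t')"
    using t by (intro mult_mat_vec_index_sum) (auto simp: companion_kron_left_def monomial_vec_def)
  also have "\<dots> = (\<Sum>i<degree p. \<Sum>j<s. ?M $$ (t,i*s+j) * ?v $ (i*s+j))"
    by (rule sum_lessThan_mult_split)
  also have "\<dots> = (\<Sum>i<degree p. \<Sum>j<s.
      if j = j0 then of_int (companion_row p i0 i) * (x ^ i * y ^ j) else 0)"
    using t mult_add_less_mult[of _ "degree p" _ s]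
    by (intro sum.cong refl) (simp add: companion_kron_left_def monomial_vec_def i0_def j0_def)
  also have "\<dots> = (\<Sum>i<degree p. of_int (companion_row p i0 i) * x ^ i) * y ^ j0"
    using j0 by (simp add: sum_distrib_right mult.assoc)
  also have "\<dots> = x ^ (i0 + 1) * y ^ j0"
    using companion_row_sum[OF lc root i0] by simp
  also have "\<dots> = (x \<cdot>\<^sub>v ?v) $ t"
    using t by (simp add: monomial_vec_def i0_def j0_def)
  finally show "(?M *\<^sub>v ?v) $ t = (x \<cdot>\<^sub>v ?v) $ t" .
qed (simp_all add: companion_kron_left_def monomial_vec_def)

lemma companion_kron_right_eigen:
  assumes lc: "lead_coeff q = 1" and root: "poly (map_poly of_int q) y = 0"
  shows "map_mat of_int (companion_kron_right r q) *\<^sub>v monomial_vec x y r (degree q)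
    = y \<cdot>\<^sub>v monomial_vec x y r (degree q)"
    (is "?M *\<^sub>v ?v = _")
proof (rule eq_vecI)
  fix t assume "t < dim_vec (y \<cdot>\<^sub>v ?v)"
  then have t: "t < r * degree q" by (simp add: monomial_vec_def)
  define s where "s = degree q"
  define i0 where "i0 = t div s"
  define j0 where "j0 = t mod s"
  have s: "s > 0" using t unfolding s_def by (cases "degree q") auto
  have i0: "i0 < r" using t unfolding i0_def s_def by (simp add: less_mult_imp_div_less)
  have j0: "j0 < degree q" using s unfolding j0_def s_def by simp
  have "(?M *\<^sub>v ?v) $ t = (\<Sum>t'<r * s. ?M $$ (t,t') * ?v $ t')"
    using t by (intro mult_mat_vec_index_sum) (auto simp: companion_kron_right_def monomial_vec_def s_def)
  also have "\<dots> = (\<Sum>i<r. \<Sum>j<s. ?M $$ (t,i*s+j) * ?v $ (i*s+j))"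
    by (rule sum_lessThan_mult_split)
  also have "\<dots> = (\<Sum>i<r. if i = i0 then (\<Sum>j<s. of_int (companion_row q j0 j) * (x ^ i * y ^ j)) else 0)"
    using t mult_add_less_mult[of _ r _ s]
    by (intro sum.cong refl) (auto simp: companion_kron_right_def monomial_vec_def i0_def j0_def s_def)
  also have "\<dots> = x ^ i0 * (\<Sum>j<degree q. of_int (companion_row q j0 j) * y ^ j)"
    using i0 by (simp add: sum_distrib_left mult.assoc mult.left_commute s_def)
  also have "\<dots> = x ^ i0 * y ^ (j0 + 1)"
    using companion_row_sum[OF lc root j0] by simp
  also have "\<dots> = (y \<cdot>\<^sub>v ?v) $ t"
    using t by (simp add: monomial_vec_def i0_def j0_def s_def)
  finally show "(?M *\<^sub>v ?v) $ t = (y \<cdot>\<^sub>v ?v) $ t" .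
qed (simp_all add: companion_kron_right_def monomial_vec_def)

lemma algebraic_int_plus_times_of_common_eigenvector:
  fixes X Y :: "int mat" and v :: "complex vec"
  assumes X: "X \<in> carrier_mat N N" and Y: "Y \<in> carrier_mat N N"
    and v: "v \<in> carrier_vec N" "v \<noteq> 0\<^sub>v N"
    and Xv: "map_mat of_int X *\<^sub>v v = x \<cdot>\<^sub>v v"
      and Yv: "map_mat of_int Y *\<^sub>v v = y \<cdot>\<^sub>v v"
  shows "algebraic_int (x + y)" and "algebraic_int (x * y)"
proof -
  have Xc: "map_mat of_int X \<in> carrier_mat N N" and Yc: "map_mat of_int Y \<in> carrier_mat N N"
    using X Y by auto
  have "map_mat (of_int :: int \<Rightarrow> complex) (X + Y) = map_mat of_int X + map_mat of_int Y"
    using X Y by (intro eq_matI) auto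
  then have "map_mat of_int (X + Y) *\<^sub>v v = (x + y) \<cdot>\<^sub>v v"
    using Xc Yc v Xv Yv by (simp add: add_mult_distrib_mat_vec add_smult_distrib_vec)
  then show "algebraic_int (x + y)"
    using X Y v by (intro algebraic_int_of_int_mat_eigenvalue[of "X + Y" N]) auto
  have "map_mat of_int (X * Y) *\<^sub>v v = map_mat of_int X *\<^sub>v (map_mat of_int Y *\<^sub>v v)"
    using Xc Yc v by (simp add: of_int_hom.mat_hom_mult[OF X Y] assoc_mult_mat_vec)
  also have "\<dots> = (x * y) \<cdot>\<^sub>v v"
    using Xv Yv Xc v by (simp add: mult_mat_vec smult_smult_assoc mult.commute)
  finally show "algebraic_int (x * y)"
    using X Y v by (intro algebraic_int_of_int_mat_eigenvalue[of "X * Y" N]) auto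
qed

lemma
  fixes x y :: complex
  assumes x: "algebraic_int x" and y: "algebraic_int y"
  shows algebraic_int_plus: "algebraic_int (x + y)"
    and algebraic_int_times: "algebraic_int (x * y)"
proof -
  obtain p where p: "lead_coeff p = 1" "poly (map_poly of_int p) x = 0" "degree p \<ge> 1"
    using algebraic_int_obtain_monic_poly[OF x] by blast
  obtain q where q: "lead_coeff q = 1" "poly (map_poly of_int q) y = 0" "degree q \<ge> 1"
    using algebraic_int_obtain_monic_poly[OF y] by blast
  define v where "v = monomial_vec x y (degree p) (degree q)"
  have "v $ 0 = 1" "0 < degree p * degree q"
    using p(3) q(3) by (auto simp: v_def monomial_vec_def)
  then have "v \<noteq> 0\<^sub>v (degree p * degree q)" by auto
  then show "algebraic_int (x + y)" "algebraic_int (x * y)"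
    using algebraic_int_plus_times_of_common_eigenvector[OF _ _ _ _
        companion_kron_left_eigen[OF p(1,2)] companion_kron_right_eigen[OF q(1,2)]]
    by (auto simp: v_def monomial_vec_def companion_kron_left_def companion_kron_right_def)
qed

lemma coeff_linear_factor_mult:
  fixes a :: "'a::comm_ring_1"
  shows "coeff ([:-a, 1:] * P) i = - a * coeff P i + (case i of 0 \<Rightarrow> 0 | Suc k \<Rightarrow> coeff P k)"
proof -
  have "[:1:] * P = P" by simp
  then have "[:-a, 1:] * P = Polynomial.smult (-a) P + pCons 0 P" by (simp only: mult_pCons_left)
  then show ?thesis by (simp add: coeff_pCons split: nat.splits)
qed

lemma algebraic_int_coeff_prod_linear_factors:
  fixes rs :: "complex list"
  assumes "\<And>r. r \<in> set rs \<Longrightarrow> algebraic_int r"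
  shows "algebraic_int (coeff (\<Prod>\<rho>\<leftarrow>rs. [:-\<rho>, 1:]) i)"
  using assms
proof (induction rs arbitrary: i)
  case Nil
  then show ?case by (cases i) (auto simp: int_imp_algebraic_int)
next
  case (Cons a rs)
  have a: "algebraic_int (-a)" using Cons.prems by auto
  have IH: "algebraic_int (coeff (\<Prod>\<rho>\<leftarrow>rs. [:-\<rho>, 1:]) j)" for j
    using Cons by auto
  have pe: "(\<Prod>\<rho>\<leftarrow>a # rs. [:-\<rho>, 1:]) =
      [:-a, 1:] * (\<Prod>\<rho>\<leftarrow>rs. [:-\<rho>, 1:])" by simp
  show ?case
  proof (cases i)
    case 0
    then show ?thesis unfolding pe coeff_linear_factor_mult using algebraic_int_times[OF a IH] by simp
  next
    case (Suc k)
    then show ?thesis unfolding pe coeff_linear_factor_mult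
      using algebraic_int_plus[OF algebraic_int_times[OF a IH] IH] by simp
  qed
qed

lemma norm_coeff_prod_linear_factors_le:
  fixes rs :: "complex list"
  assumes "\<And>r. r \<in> set rs \<Longrightarrow> cmod r \<le> R"
  shows "cmod (coeff (\<Prod>\<rho>\<leftarrow>rs. [:-\<rho>, 1:]) i) \<le> (1 + R) ^ length rs"
  using assms
proof (induction rs arbitrary: i)
  case Nil
  then show ?case by (cases i) auto
next
  case (Cons a rs)
  have R: "0 \<le> R" using Cons.prems[of a] by (meson list.set_intros(1) norm_ge_zero order_trans)
  have a: "cmod a \<le> R" using Cons.prems by auto
  define P where "P = (\<Prod>\<rho>\<leftarrow>rs. [:-\<rho>, 1:])"
  have IH: "cmod (coeff P j) \<le> (1 + R) ^ length rs" for j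
    using Cons unfolding P_def by auto
  have t2: "cmod (case i of 0 \<Rightarrow> 0 | Suc k \<Rightarrow> coeff P k) \<le> (1 + R) ^ length rs"
    using IH R by (cases i) auto
  have pe: "(\<Prod>\<rho>\<leftarrow>a # rs. [:-\<rho>, 1:]) = [:-a, 1:] * P" by (simp add: P_def)
  have "cmod (coeff ([:-a, 1:] * P) i) \<le> cmod (- a * coeff P i) +
      cmod (case i of 0 \<Rightarrow> 0 | Suc k \<Rightarrow> coeff P k)"
    unfolding coeff_linear_factor_mult by (rule norm_triangle_ineq)
  also have "\<dots> \<le> R * (1 + R) ^ length rs + (1 + R) ^ length rs"
    using t2 IH[of i] a R by (intro add_mono) (auto simp: norm_mult intro!: mult_mono)
  also have "\<dots> = (1 + R) ^ length (a # rs)" by (simp add: algebra_simps)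
  finally show ?case unfolding pe .
qed
lemma algebraic_int_times_real: "algebraic_int (x::real) \<Longrightarrow>
    algebraic_int y \<Longrightarrow> algebraic_int (x * y)"
  using algebraic_int_times[of "of_real x" "of_real y"] by (metis algebraic_int_of_real_iff of_real_mult)

lemma complex_of_real_of_rat: "complex_of_real (of_rat q) = of_rat q"
  by (cases q) (simp add: of_rat_rat)

lemma rat_in_Ints_if_algebraic_int: "algebraic_int (of_rat c :: complex) \<Longrightarrow> c \<in> \<int>"
proof -
  assume a: "algebraic_int (of_rat c :: complex)"
  have "(of_rat c :: complex) \<in> \<int>" by (rule rational_algebraic_int_is_int[OF a]) simp
  then obtain k where "(of_rat c :: complex) = of_int k" by (auto elim: Ints_cases)
  then have "(of_rat c :: complex) = of_rat (of_int k)" by simp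
  then have "c = of_int k" by (simp only: of_rat_eq_iff)
  then show ?thesis by simp
qed

lemma finite_rat_common_denominator: "finite (A :: rat set) \<Longrightarrow>
    \<exists>D::int. D > 0 \<and> (\<forall>q\<in>A. of_int D * q \<in> \<int>)"
proof (induction A rule: finite_induct)
  case empty
  then show ?case by (intro exI[of _ 1]) auto
next
  case (insert q A)
  then obtain D :: int where D: "D > 0" "\<forall>q\<in>A. of_int D * q \<in> \<int>" by blast
  obtain a b where ab: "quotient_of q = (a, b)" by (cases "quotient_of q")
  have b: "b > 0" using quotient_of_denom_pos[OF ab] .
  have q: "q = of_int a / of_int b" using quotient_of_div[OF ab] .
  have bq: "of_int b * q = of_int a" using b by (simp add: q)
  have "of_int (D * b) * q = of_int D * (of_int b * q)" by (simp add: mult.assoc)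
  also have "\<dots> = of_int (D * a)" by (simp add: bq)
  finally have 1: "of_int (D * b) * q \<in> \<int>" by (metis Ints_of_int)
  have 2: "of_int (D * b) * q' \<in> \<int>" if "q' \<in> A" for q'
  proof -
    have "of_int (D * b) * q' = of_int b * (of_int D * q')" by simp
    then show ?thesis using D(2) that by (metis Ints_mult Ints_of_int)
  qed
  show ?case using 1 2 D(1) b by (intro exI[of _ "D * b"]) auto
qed

lemma finite_bounded_rat_Ints: "finite {q::rat. q \<in> \<int> \<and> \<bar>of_rat q :: real\<bar> \<le> C}"
proof (rule finite_subset)
  show "{q::rat. q \<in> \<int> \<and> \<bar>of_rat q :: real\<bar> \<le>
      C} \<subseteq> of_int ` {-\<lceil>C\<rceil>..\<lceil>C\<rceil>}"
  proof
    fix q assume "q \<in> {q::rat. q \<in> \<int> \<and> \<bar>of_rat q :: real\<bar> \<le> C}"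
    then have q: "q \<in> \<int>" "\<bar>of_rat q :: real\<bar> \<le> C" by auto
    from q(1) obtain k where k0: "q = of_int k" by (auto elim: Ints_cases)
    have k: "q = of_int k" "\<bar>real_of_int k\<bar> \<le> C" using k0 q(2) by auto
    have c: "C \<le> of_int \<lceil>C\<rceil>" by (rule le_of_int_ceiling)
    have k2: "real_of_int k \<le> C" "- C \<le> real_of_int k" using k(2) by (auto simp: abs_le_iff)
    have "real_of_int k \<le> of_int \<lceil>C\<rceil>" using k2 c by linarith
    moreover have "real_of_int (-\<lceil>C\<rceil>) \<le> of_int k" using k2 c by (simp only: of_int_minus)
    ultimately have "real_of_int k \<le>
        of_int \<lceil>C\<rceil>" "real_of_int (-\<lceil>C\<rceil>) \<le> of_int k" by auto
    then have "k \<in> {-\<lceil>C\<rceil>..\<lceil>C\<rceil>}" by (simp only: of_int_le_iff atLeastAtMost_iff)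
    then show "q \<in> of_int ` {-\<lceil>C\<rceil>..\<lceil>C\<rceil>}" using k by auto
  qed
qed simp

lemma finite_polys_with_coeffs_in:
  assumes "finite Z"
  shows "finite {p :: 'a::zero poly. degree p \<le> d \<and> (\<forall>i\<le>d. coeff p i \<in> Z)}" (is "finite ?S")
proof -
  have "inj_on (\<lambda>p. restrict (coeff p) {..d}) ?S"
  proof (rule inj_onI)
    fix p q assume "p \<in> ?S" "q \<in> ?S" and eq: "restrict (coeff p) {..d} = restrict (coeff q) {..d}"
    show "p = q"
    proof (rule poly_eqI)
      fix i
      show "coeff p i = coeff q i"
      proof (cases "i \<le> d")
        case True
        then show ?thesis using fun_cong[OF eq, of i] by simp
      next
        case False
        then show ?thesis using \<open>p \<in> ?S\<close> \<open>q \<in> ?S\<close> by (simp add: coeff_eq_0)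
      qed
    qed
  qed
  moreover have "(\<lambda>p. restrict (coeff p) {..d}) ` ?S \<subseteq> PiE {..d} (\<lambda>_. Z)"
  proof (rule image_subsetI)
    fix p assume "p \<in> ?S"
    then show "restrict (coeff p) {..d} \<in> PiE {..d} (\<lambda>_. Z)"
      by (subst restrict_PiE_iff) auto
  qed
  then have "finite ((\<lambda>p. restrict (coeff p) {..d}) ` ?S)"
    by (rule finite_subset) (simp add: finite_PiE assms)
  ultimately show ?thesis using finite_imageD by blast
qed

section \<open>Bilinear forms\<close>
lemma bil_expand:
  assumes B: "B \<in> carrier_mat n n" and x: "x \<in> carrier_vec n" and y: "y \<in> carrier_vec n"
  shows "bil B x y = (\<Sum>i<n. x $ i * (\<Sum>j<n. B $$ (i,j) * y $ j))"
  using B x y by (simp add: bil_def scalar_prod_def lessThan_atLeast0)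

lemma bil_add_left: "B \<in> carrier_mat n n \<Longrightarrow> x \<in> carrier_vec n \<Longrightarrow>
    y \<in> carrier_vec n \<Longrightarrow> z \<in> carrier_vec n \<Longrightarrow>
  bil B (x + y) z = bil B x z + bil B y z"
  unfolding bil_def by (rule add_scalar_prod_distrib[of _ n]) auto

lemma bil_add_right: "B \<in> carrier_mat n n \<Longrightarrow> x \<in> carrier_vec n \<Longrightarrow>
    y \<in> carrier_vec n \<Longrightarrow> z \<in> carrier_vec n \<Longrightarrow>
  bil B x (y + z) = bil B x y + bil B x z"
  unfolding bil_def by (simp add: mult_add_distrib_mat_vec[of _ n n] scalar_prod_add_distrib[of _ n])

lemma bil_smult_left: "B \<in> carrier_mat n n \<Longrightarrow> x \<in> carrier_vec n \<Longrightarrow>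
    z \<in> carrier_vec n \<Longrightarrow>
  bil B (c \<cdot>\<^sub>v x) z = c * bil B x z"
  unfolding bil_def by (rule smult_scalar_prod_distrib[of _ n]) auto

lemma bil_smult_right: "B \<in> carrier_mat n n \<Longrightarrow>
    x \<in> carrier_vec n \<Longrightarrow> z \<in> carrier_vec n \<Longrightarrow>
  bil B x (c \<cdot>\<^sub>v z) = c * bil B x z"
  unfolding bil_def by (simp add: mult_mat_vec[of _ n n] scalar_prod_smult_distrib[of _ n])

lemma bil_minus_left: "B \<in> carrier_mat n n \<Longrightarrow> x \<in> carrier_vec n \<Longrightarrow>
    y \<in> carrier_vec n \<Longrightarrow> z \<in> carrier_vec n \<Longrightarrow>
  bil B (x - y) z = bil B x z - bil B y z"
  unfolding bil_def by (rule minus_scalar_prod_distrib[of _ n]) auto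

lemma bil_minus_right: "B \<in> carrier_mat n n \<Longrightarrow>
    x \<in> carrier_vec n \<Longrightarrow> y \<in> carrier_vec n \<Longrightarrow> z \<in> carrier_vec n \<Longrightarrow>
  bil B x (y - z) = bil B x y - bil B x z"
  unfolding bil_def by (simp add: mult_minus_distrib_mat_vec[of _ n n] scalar_prod_minus_distrib[of _ n])

lemma bil_zero_left[simp]: "B \<in> carrier_mat n n \<Longrightarrow>
    z \<in> carrier_vec n \<Longrightarrow> bil B (0\<^sub>v n) z = 0"
  unfolding bil_def by simp

lemma bil_sym: assumes B: "B \<in> carrier_mat n n" and s: "transpose_mat B = B"
  and x: "x \<in> carrier_vec n" and y: "y \<in> carrier_vec n"
  shows "bil B x y = bil B y x"
proof -
  have "bil B x y = (transpose_mat B *\<^sub>v x) \<bullet> y"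
    unfolding bil_def by (rule transpose_vec_mult_scalar[symmetric, OF B y x])
  also have "\<dots> = (B *\<^sub>v x) \<bullet> y" using s by simp
  also have "\<dots> = y \<bullet> (B *\<^sub>v x)" by (rule comm_scalar_prod[of _ n]) (use B x y in auto)
  finally show ?thesis unfolding bil_def .
qed

lemma bil_isometry:
  assumes B: "B \<in> carrier_mat n n" and g: "g \<in> carrier_mat n n" and iso: "transpose_mat g * B * g = B"
    and x: "x \<in> carrier_vec n" and y: "y \<in> carrier_vec n"
  shows "bil B (g *\<^sub>v x) (g *\<^sub>v y) = bil B x y"
proof -
  define w where "w = B *\<^sub>v (g *\<^sub>v y)"
  have w: "w \<in> carrier_vec n" unfolding w_def using B g y by simp
  have "bil B (g *\<^sub>v x) (g *\<^sub>v y) = (g *\<^sub>v x) \<bullet> w" unfolding bil_def w_def ..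
  also have "\<dots> = w \<bullet> (g *\<^sub>v x)" by (rule comm_scalar_prod[of _ n]) (use g x w in auto)
  also have "\<dots> = (transpose_mat g *\<^sub>v w) \<bullet> x"
    by (rule transpose_vec_mult_scalar[symmetric, OF g x w])
  also have "transpose_mat g *\<^sub>v w = (transpose_mat g * B * g) *\<^sub>v y"
  proof -
    have gT: "transpose_mat g \<in> carrier_mat n n" using g by simp
    have "(transpose_mat g * B * g) *\<^sub>v y = (transpose_mat g * B) *\<^sub>v (g *\<^sub>v y)"
      by (rule assoc_mult_mat_vec[of _ n n]) (use gT B g y in auto)
    also have "\<dots> = transpose_mat g *\<^sub>v (B *\<^sub>v (g *\<^sub>v y))"
      by (rule assoc_mult_mat_vec[of _ n n]) (use gT B g y in auto)
    finally show ?thesis unfolding w_def by simp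
  qed
  also have "\<dots> = B *\<^sub>v y" using iso by simp
  also have "(B *\<^sub>v y) \<bullet> x = x \<bullet> (B *\<^sub>v y)"
    by (rule comm_scalar_prod[of _ n]) (use B x y in auto)
  finally show ?thesis unfolding bil_def .
qed

lemma bil_cauchy_schwarz:
  assumes B: "B \<in> carrier_mat n n" and s: "transpose_mat B = B"
    and V: "vec_subspace n V" and pd: "\<forall>v\<in>V. v \<noteq> 0\<^sub>v n \<longrightarrow> bil B v v > 0"
    and y: "y \<in> V" and u: "u \<in> V"
  shows "(bil B y u)^2 \<le> bil B y y * bil B u u"
proof -
  have yc: "y \<in> carrier_vec n" and uc: "u \<in> carrier_vec n" using y u vec_subspaceD(1)[OF V] by auto
  have psd: "bil B v v \<ge> 0" if "v \<in> V" for v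
    using pd that B by (cases "v = 0\<^sub>v n") (auto intro: less_imp_le)
  define a where "a = bil B u u"
  define b where "b = bil B y u"
  define c where "c = bil B y y"
  have q: "0 \<le> c + 2 * t * b + t^2 * a" for t
  proof -
    have "y + t \<cdot>\<^sub>v u \<in> V" using vec_subspaceD(2,3)[OF V] y u by blast
    then have "0 \<le> bil B (y + t \<cdot>\<^sub>v u) (y + t \<cdot>\<^sub>v u)" by (rule psd)
    also have "\<dots> = c + t * bil B u y + t * b + t * (t * a)"
      using B yc uc by (simp add: bil_add_left[of _ n] bil_add_right[of _ n] bil_smult_left[of _ n] bil_smult_right[of _ n] a_def b_def c_def algebra_simps)
    also have "bil B u y = b" unfolding b_def by (rule bil_sym[OF B s uc yc])
    finally show ?thesis by (simp add: power2_eq_square algebra_simps)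
  qed
  have a0: "a \<ge> 0" unfolding a_def by (rule psd[OF u])
  show ?thesis
  proof (cases "a = 0")
    case True
    have "b = 0"
    proof (rule ccontr)
      assume "b \<noteq> 0"
      have "0 \<le> c + 2 * (- (c + 1) / (2 * b)) * b + (- (c + 1) / (2 * b))^2 * a" by (rule q)
      then show False using True \<open>b \<noteq> 0\<close> by (simp add: field_simps)
    qed
    then show ?thesis using True by (simp add: a_def b_def c_def)
  next
    case False
    then have ap: "a > 0" using a0 by simp
    have "0 \<le> c + 2 * (- b / a) * b + (- b / a)^2 * a" by (rule q)
    then have "0 \<le> c - b^2 / a" using ap by (simp add: power2_eq_square field_simps)
    then have "b^2 / a \<le> c" by simp
    then have "b^2 \<le> c * a" using ap by (simp add: divide_le_eq)
    then show ?thesis by (simp add: a_def b_def c_def)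
  qed
qed

interpretation fun_vs: vector_space "\<lambda>(r::real) (f::nat\<Rightarrow>real). (\<lambda>i. r * f i)"
  by unfold_locales (auto simp: algebra_simps fun_eq_iff)

definition vec_to_fun :: "nat \<Rightarrow> real vec \<Rightarrow> nat \<Rightarrow> real" where
  "vec_to_fun n v = (\<lambda>i. if i < n then v $ i else 0)"

lemma vec_to_fun_span: "vec_to_fun n v \<in> fun_vs.span ((\<lambda>i. (\<lambda>k. if k = i then 1 else 0)) ` {..<n})"
proof -
  let ?E = "(\<lambda>i. (\<lambda>k::nat. if k = i then 1 else 0::real)) ` {..<n}"
  have "m \<le> n \<Longrightarrow> (\<lambda>k. if k < m then v $ k else 0) \<in> fun_vs.span ?E" for m
  proof (induction m)
    case 0
    have "(\<lambda>k::nat. if k < 0 then v $ k else 0) = 0" by (auto simp: fun_eq_iff)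
    then show ?case using fun_vs.span_zero by simp
  next
    case (Suc m)
    have e: "(\<lambda>k. if k = m then 1 else 0) \<in> fun_vs.span ?E" using Suc.prems by (intro fun_vs.span_base) auto
    have "(\<lambda>k. if k < Suc m then v $ k else 0) =
        (\<lambda>k. if k < m then v $ k else 0) + (\<lambda>i. v $ m * (if i = m then 1 else 0))"
      by (auto simp: fun_eq_iff less_Suc_eq)
    then show ?case using fun_vs.span_add[OF Suc.IH fun_vs.span_scale[OF e]] Suc.prems by simp
  qed
  then show ?thesis unfolding vec_to_fun_def by simp
qed

lemma finite_orthogonality_test_subset:
  assumes ON: "Ob \<subseteq> carrier_vec n" and B: "B \<in> carrier_mat n n"
  shows "\<exists>U. finite U \<and> U \<subseteq> Ob \<and>
      (\<forall>z \<in> carrier_vec n. (\<forall>u\<in>U. bil B z u = 0) \<longrightarrow> (\<forall>y\<in>Ob. bil B z y = 0))"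
proof -
  let ?E = "(\<lambda>i. (\<lambda>k::nat. if k = i then 1 else 0::real)) ` {..<n}"
  obtain Bs where Bs: "Bs \<subseteq> vec_to_fun n ` Ob" "fun_vs.independent Bs" "vec_to_fun n ` Ob \<subseteq> fun_vs.span Bs"
    using fun_vs.maximal_independent_subset[of "vec_to_fun n ` Ob"] by blast
  have "Bs \<subseteq> fun_vs.span ?E" using Bs(1) vec_to_fun_span by blast
  then have finB: "finite Bs" using fun_vs.independent_span_bound[of ?E Bs] Bs(2) by simp
  define U where "U = inv_into Ob (vec_to_fun n) ` Bs"
  have finU: "finite U" unfolding U_def using finB by simp
  have UO: "U \<subseteq> Ob" unfolding U_def using Bs(1) by (auto intro: inv_into_into)
  have "(\<forall>u\<in>U. bil B z u = 0) \<longrightarrow> (\<forall>y\<in>Ob. bil B z y = 0)"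
    if z: "z \<in> carrier_vec n" for z
  proof (intro impI ballI)
    fix y assume U0: "\<forall>u\<in>U. bil B z u = 0" and y: "y \<in> Ob"
    define ell where "ell f = (\<Sum>i<n. z $ i * (\<Sum>j<n. B $$ (i,j) * f j))" for f :: "nat \<Rightarrow> real"
    have ell_phi: "ell (vec_to_fun n v) = bil B z v" if "v \<in> carrier_vec n" for v
      using bil_expand[OF B z that] unfolding ell_def vec_to_fun_def by simp
    have ell0: "ell 0 = 0" unfolding ell_def by simp
    have elladd: "ell (f + h) = ell f + ell h" for f h
      unfolding ell_def by (simp add: sum.distrib distrib_left)
    have ellsc: "ell (\<lambda>i. c * f i) = c * ell f" for c f
      unfolding ell_def by (simp add: sum_distrib_left mult.left_commute)
    have sub: "fun_vs.subspace {f. ell f = 0}"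
      unfolding fun_vs.subspace_def using ell0 elladd ellsc by auto
    have "ell b = 0" if b: "b \<in> Bs" for b
    proof -
      have "inv_into Ob (vec_to_fun n) b \<in> U" unfolding U_def using b by simp
      then have "bil B z (inv_into Ob (vec_to_fun n) b) = 0" using U0 by blast
      moreover have "vec_to_fun n (inv_into Ob (vec_to_fun n) b) = b" using b Bs(1) by (auto intro: f_inv_into_f)
      moreover have "inv_into Ob (vec_to_fun n) b \<in> carrier_vec n" using b Bs(1) ON by (auto intro: inv_into_into)
      ultimately show ?thesis using ell_phi by metis
    qed
    then have "\<forall>f\<in>fun_vs.span Bs. ell f = 0" using fun_vs.span_induct[OF _ sub] by blast
    moreover have "vec_to_fun n y \<in> fun_vs.span Bs" using Bs(3) y by blast
    ultimately have "ell (vec_to_fun n y) = 0" by blast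
    then show "bil B z y = 0" using ell_phi y ON by auto
  qed
  then show ?thesis using finU UO by blast
qed

lemma abs_le_if_square_le: "(a::real)^2 \<le> c * c \<Longrightarrow> \<bar>a\<bar> \<le> \<bar>c\<bar>"
  by (metis abs_le_square_iff power2_eq_square)

lemma obtain_finite_bil_separating_subset:
  fixes B :: "real mat"
  assumes B: "B \<in> carrier_mat n n" and X: "vec_subspace n X"
    and pd: "\<forall>x\<in>X. x \<noteq> 0\<^sub>v n \<longrightarrow> bil B x x > 0" and S: "S \<subseteq> X"
  obtains U where "finite U" "U \<subseteq> S" "inj_on (\<lambda>y. restrict (bil B y) U) S"
proof -
  have SN: "S \<subseteq> carrier_vec n" using S vec_subspaceD(1)[OF X] by auto
  obtain U where U: "finite U" "U \<subseteq> S"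
    and test: "\<forall>z\<in>carrier_vec n. (\<forall>u\<in>U. bil B z u = 0) \<longrightarrow> (\<forall>y\<in>S. bil B z y = 0)"
    using finite_orthogonality_test_subset[OF SN B] by blast
  have "inj_on (\<lambda>y. restrict (bil B y) U) S"
  proof (rule inj_onI)
    fix y y' assume y: "y \<in> S" and y': "y' \<in> S"
      and eq: "restrict (bil B y) U = restrict (bil B y') U"
    have yc: "y \<in> carrier_vec n" and y'c: "y' \<in> carrier_vec n" using y y' SN by auto
    define z where "z = y - y'"
    have z: "z \<in> carrier_vec n" "z \<in> X"
      using yc y'c y y' S vec_subspace_diff[OF X] by (auto simp: z_def)
    have "bil B z u = 0" if "u \<in> U" for u
      using that fun_cong[OF eq, of u] U(2) SN
      by (auto simp: z_def bil_minus_left[OF B yc y'c])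
    then have "bil B z y = 0" "bil B z y' = 0" using test z(1) y y' by auto
    then have "bil B z z = 0" unfolding z_def by (simp add: bil_minus_right[OF B _ yc y'c] z(1)[unfolded z_def])
    then have "z = 0\<^sub>v n" using pd z(2) by force
    then show "y = y'" using minus_vec_eq_zero_imp_eq[OF yc y'c] by (simp add: z_def)
  qed
  then show ?thesis using that U by blast
qed

lemma isometry_inj_on:
  fixes B g :: "real mat"
  assumes B: "B \<in> carrier_mat n n" and g: "g \<in> carrier_mat n n" and iso: "transpose_mat g * B * g = B"
    and X: "vec_subspace n X" and pd: "\<forall>x\<in>X. x \<noteq> 0\<^sub>v n \<longrightarrow> bil B x x > 0"
  shows "inj_on (\<lambda>v. g *\<^sub>v v) X"
proof (rule inj_onI)
  fix u v assume u: "u \<in> X" and v: "v \<in> X" and eq: "g *\<^sub>v u = g *\<^sub>v v"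
  have uc: "u \<in> carrier_vec n" and vc: "v \<in> carrier_vec n" using u v vec_subspaceD(1)[OF X] by auto
  have gz: "g *\<^sub>v (u - v) = 0\<^sub>v n"
    using eq g uc vc by (simp add: mult_minus_distrib_mat_vec)
  have "bil B (u - v) (u - v) = bil B (g *\<^sub>v (u - v)) (g *\<^sub>v (u - v))"
    using uc vc by (simp add: bil_isometry[OF B g iso])
  also have "\<dots> = 0" unfolding gz using B by simp
  finally have "u - v = 0\<^sub>v n" using pd vec_subspace_diff[OF X u v] by force
  then show "u = v" by (rule minus_vec_eq_zero_imp_eq[OF uc vc])
qed

section \<open>Totally real number fields\<close>

lemma sum_set_nth: "distinct xs \<Longrightarrow> sum f (set xs) = (\<Sum>i<length xs. f (xs ! i))"
  using sum.reindex_bij_betw[OF bij_betw_nth[of xs "{..<length xs}" "set xs"], of f] by simp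

interpretation rat_vs: vector_space "\<lambda>(q::rat) (x::real). of_rat q * x"
  by unfold_locales (auto simp: of_rat_add of_rat_mult algebra_simps)

locale totally_real_field =
  fixes K :: "real set"
  assumes tr: "totally_real K"
begin

lemma K_subfield: "subfield_real K"
  using tr unfolding totally_real_def number_field_real_def by blast

lemma K_0[simp]: "0 \<in> K" and K_1[simp]: "1 \<in> K"
  using K_subfield unfolding subfield_real_def by auto

lemma K_add[simp]: "x \<in> K \<Longrightarrow> y \<in> K \<Longrightarrow> x + y \<in> K"
  and K_diff[simp]: "x \<in> K \<Longrightarrow> y \<in> K \<Longrightarrow> x - y \<in> K"
  and K_mult[simp]: "x \<in> K \<Longrightarrow> y \<in> K \<Longrightarrow> x * y \<in> K"
  using K_subfield unfolding subfield_real_def by blast+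

lemma K_inverse[simp]: "x \<in> K \<Longrightarrow> inverse x \<in> K"
  using K_subfield unfolding subfield_real_def by (cases "x = 0") auto

lemma K_uminus[simp]: "x \<in> K \<Longrightarrow> - x \<in> K"
  using K_diff[OF K_0] by simp

lemma K_divide[simp]: "x \<in> K \<Longrightarrow> y \<in> K \<Longrightarrow> x / y \<in> K"
  by (simp add: divide_inverse)

lemma K_of_nat[simp]: "of_nat n \<in> K"
  by (induction n) auto

lemma K_of_int[simp]: "of_int k \<in> K"
proof (cases "k \<ge> 0")
  case True
  then have "(of_int k :: real) = of_nat (nat k)" by simp
  then show ?thesis by (metis K_of_nat)
next
  case False
  then have "(of_int k :: real) = - of_nat (nat (-k))" by simp
  then show ?thesis by (metis K_of_nat K_uminus)
qed

lemma K_of_rat[simp]: "of_rat q \<in> K"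
proof -
  obtain a b where ab: "quotient_of q = (a, b)" by (cases "quotient_of q")
  then have "q = of_int a / of_int b" by (rule quotient_of_div)
  then have "(of_rat q :: real) = of_int a / of_int b" by (simp add: of_rat_divide)
  then show ?thesis by simp
qed

lemma K_sum[intro]: "(\<And>i. i \<in> I \<Longrightarrow> f i \<in> K) \<Longrightarrow> sum f I \<in> K"
  by (induction I rule: infinite_finite_induct) auto

lemma K_poly_of_rat: "x \<in> K \<Longrightarrow> poly (map_poly of_rat p) x \<in> K"
  by (induction p) (auto simp: map_poly_pCons)

lemma K_rat_subspace: "rat_vs.subspace K"
  unfolding rat_vs.subspace_def by auto

lemma K_rat_basis_exists: "\<exists>B. finite B \<and> rat_vs.independent B \<and> rat_vs.span B = K"
proof -
  obtain d :: nat and b :: "nat \<Rightarrow> real" where bK: "\<forall>i<d. b i \<in> K"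
    and sp: "\<forall>x\<in>K. \<exists>c. (\<forall>i<d. c i \<in> \<rat>) \<and> x = (\<Sum>i<d. c i * b i)"
    using tr unfolding totally_real_def number_field_real_def by blast
  obtain B where B: "B \<subseteq> b ` {..<d}" "rat_vs.independent B" "b ` {..<d} \<subseteq> rat_vs.span B"
    using rat_vs.maximal_independent_subset[of "b ` {..<d}"] by blast
  have fin: "finite B" using B(1) finite_subset by blast
  have "rat_vs.span B \<subseteq> K"
    using B(1) bK by (intro rat_vs.span_minimal K_rat_subspace) auto
  moreover have "K \<subseteq> rat_vs.span B"
  proof
    fix x assume "x \<in> K"
    then obtain c where c: "\<forall>i<d. c i \<in> \<rat>" "x = (\<Sum>i<d. c i * b i)" using sp by blast
    have "c i * b i \<in> rat_vs.span B" if "i < d" for i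
    proof -
      have "c i \<in> \<rat>" using c(1) that by auto
      then obtain q where "c i = of_rat q" by (metis Rats_cases)
      moreover have "b i \<in> rat_vs.span B" using B(3) that by auto
      ultimately show ?thesis using rat_vs.span_scale[of "b i" B q] by simp
    qed
    then show "x \<in> rat_vs.span B" unfolding c(2) by (intro rat_vs.span_sum) auto
  qed
  ultimately show ?thesis using fin B(2) by blast
qed

definition Qbasis :: "real set" where
  "Qbasis = (SOME B. finite B \<and> rat_vs.independent B \<and> rat_vs.span B = K)"

lemma Qbasis_is_basis: "finite Qbasis" "rat_vs.independent Qbasis" "rat_vs.span Qbasis = K"
  using someI_ex[OF K_rat_basis_exists] unfolding Qbasis_def[symmetric] by auto

definition Qbasis_list :: "real list" where "Qbasis_list = sorted_list_of_set Qbasis"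
definition deg :: nat where "deg = length Qbasis_list"

lemma set_Qbasis_list: "set Qbasis_list = Qbasis" and distinct_Qbasis_list: "distinct Qbasis_list"
  using Qbasis_is_basis(1) by (auto simp: Qbasis_list_def)

lemma Qbasis_list_in_K: "l < deg \<Longrightarrow> Qbasis_list ! l \<in> K"
proof -
  assume "l < deg"
  then have "Qbasis_list ! l \<in> Qbasis" using set_Qbasis_list unfolding deg_def by (metis nth_mem)
  then have "Qbasis_list ! l \<in> rat_vs.span Qbasis" by (rule rat_vs.span_base)
  then show ?thesis using Qbasis_is_basis(3) by simp
qed

lemma zero_notin_Qbasis: "0 \<notin> Qbasis"
  using Qbasis_is_basis(2) rat_vs.dependent_zero by blast

lemma Qbasis_list_nonzero: "l < deg \<Longrightarrow> Qbasis_list ! l \<noteq> 0"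
proof -
  assume "l < deg"
  then have "Qbasis_list ! l \<in> Qbasis" using set_Qbasis_list unfolding deg_def by (metis nth_mem)
  then show ?thesis using zero_notin_Qbasis by auto
qed

lemma deg_pos: "deg > 0"
proof (rule ccontr)
  assume "\<not> deg > 0"
  then have "Qbasis = {}" using set_Qbasis_list unfolding deg_def by auto
  then have "K = {0}" using Qbasis_is_basis(3) by simp
  then show False using K_1 by auto
qed

definition coord :: "real \<Rightarrow> nat \<Rightarrow> rat" where
  "coord x l = rat_vs.representation Qbasis x (Qbasis_list ! l)"

lemma K_in_Qbasis_span: "x \<in> K \<Longrightarrow> x \<in> rat_vs.span Qbasis"
  using Qbasis_is_basis(3) by simp

lemma coord_expansion: "x \<in> K \<Longrightarrow> x = (\<Sum>l<deg. of_rat (coord x l) * Qbasis_list ! l)"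
proof -
  assume x: "x \<in> K"
  have "(\<Sum>b\<in>Qbasis. of_rat (rat_vs.representation Qbasis x b) * b) = x"
    by (rule rat_vs.sum_representation_eq[OF Qbasis_is_basis(2) K_in_Qbasis_span[OF x] Qbasis_is_basis(1) subset_refl])
  moreover have "(\<Sum>b\<in>Qbasis. of_rat (rat_vs.representation Qbasis x b) * b) =
      (\<Sum>l<deg. of_rat (coord x l) * Qbasis_list ! l)"
    unfolding set_Qbasis_list[symmetric] sum_set_nth[OF distinct_Qbasis_list] coord_def deg_def ..
  ultimately show ?thesis by simp
qed

lemma coord_add: "x \<in> K \<Longrightarrow> y \<in> K \<Longrightarrow> coord (x + y) l = coord x l + coord y l"
proof -
  assume x: "x \<in> K" and y: "y \<in> K"
  show ?thesis unfolding coord_def rat_vs.representation_add[OF Qbasis_is_basis(2) K_in_Qbasis_span[OF y] K_in_Qbasis_span[OF x]] ..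
qed

lemma coord_scale: "x \<in> K \<Longrightarrow> coord (of_rat q * x) l = q * coord x l"
proof -
  assume x: "x \<in> K"
  show ?thesis unfolding coord_def rat_vs.representation_scale[OF Qbasis_is_basis(2) K_in_Qbasis_span[OF x]] ..
qed

lemma coord_sum: "(\<And>i. i \<in> I \<Longrightarrow> f i \<in> K) \<Longrightarrow>
    coord (sum f I) l = (\<Sum>i\<in>I. coord (f i) l)"
proof -
  assume f: "\<And>i. i \<in> I \<Longrightarrow> f i \<in> K"
  have "rat_vs.representation Qbasis (sum f I) = (\<lambda>b. \<Sum>i\<in>I. rat_vs.representation Qbasis (f i) b)"
    by (rule rat_vs.representation_sum[OF Qbasis_is_basis(2)]) (rule K_in_Qbasis_span, rule f)
  then show ?thesis unfolding coord_def by simp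
qed

lemma coord_Qbasis_list: "j < deg \<Longrightarrow> l < deg \<Longrightarrow>
    coord (Qbasis_list ! j) l = (if l = j then 1 else 0)"
proof -
  assume j: "j < deg" and l: "l < deg"
  have "Qbasis_list ! j \<in> Qbasis" using j set_Qbasis_list unfolding deg_def by (metis nth_mem)
  then have r: "rat_vs.representation Qbasis (Qbasis_list ! j) = (\<lambda>v. if v = Qbasis_list ! j then 1 else 0)"
    by (rule rat_vs.representation_basis[OF Qbasis_is_basis(2)])
  have "(Qbasis_list ! l = Qbasis_list ! j) = (l = j)" using j l distinct_Qbasis_list unfolding deg_def
    by (simp add: nth_eq_iff_index_eq)
  then show ?thesis unfolding coord_def r by simp
qed

lemma coord_lincomb: "(\<And>i. i \<in> I \<Longrightarrow> f i \<in> K) \<Longrightarrow>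
    coord (\<Sum>i\<in>I. of_rat (c i) * f i) l = (\<Sum>i\<in>I. c i * coord (f i) l)"
  by (subst coord_sum) (auto simp: coord_scale)

text \<open>\<open>K\<close> is a subfield of \<open>\<real>\<close>, the embedding \<open>\<lambda>\<^sub>1\<close> being the inclusion. \<open>mult_matrix x\<close> is the
  matrix of multiplication by \<open>x\<close> in a \<open>\<rat>\<close>-basis of \<open>K\<close>; its eigenvalues are exactly the
  conjugates \<open>\<tau> x\<close> of \<open>x\<close> under the field embeddings \<open>\<tau>\<close>.\<close>

definition mult_matrix :: "real \<Rightarrow> rat mat" where
  "mult_matrix x = mat deg deg (\<lambda>(i,j). coord (x * Qbasis_list ! j) i)"

lemma mult_matrix_carrier[simp]: "mult_matrix x \<in> carrier_mat deg deg"
  and mult_matrix_dims[simp]: "dim_row (mult_matrix x) = deg" "dim_col (mult_matrix x) = deg"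
  by (auto simp: mult_matrix_def)

lemma mult_matrix_index[simp]: "i < deg \<Longrightarrow> j < deg \<Longrightarrow>
    mult_matrix x $$ (i,j) = coord (x * Qbasis_list ! j) i"
  by (simp add: mult_matrix_def)

lemma mult_matrix_add: "x \<in> K \<Longrightarrow> y \<in> K \<Longrightarrow>
    mult_matrix (x + y) = mult_matrix x + mult_matrix y"
  by (rule eq_matI) (auto simp: distrib_right coord_add Qbasis_list_in_K)

lemma mult_matrix_mult: assumes x: "x \<in> K" and y: "y \<in> K" shows "mult_matrix (x * y) =
    mult_matrix x * mult_matrix y"
proof (rule eq_matI)
  fix i j assume "i < dim_row (mult_matrix x * mult_matrix y)" "j < dim_col (mult_matrix x * mult_matrix y)"
  then have i: "i < deg" and j: "j < deg" by auto
  have e: "y * Qbasis_list ! j = (\<Sum>k<deg. of_rat (coord (y * Qbasis_list ! j) k) * Qbasis_list ! k)"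
    by (rule coord_expansion) (simp add: y Qbasis_list_in_K j)
  have e2: "x * y * Qbasis_list ! j = (\<Sum>k<deg. of_rat (coord (y * Qbasis_list ! j) k) * (x * Qbasis_list ! k))"
    by (subst mult.assoc, subst e) (simp add: sum_distrib_left algebra_simps)
  have "coord (x * y * Qbasis_list ! j) i
      = (\<Sum>k<deg. coord (y * Qbasis_list ! j) k * coord (x * Qbasis_list ! k) i)"
    unfolding e2 by (rule coord_lincomb) (simp add: x Qbasis_list_in_K)
  moreover have "(mult_matrix x * mult_matrix y) $$ (i, j) =
      (\<Sum>k<deg. mult_matrix x $$ (i,k) * mult_matrix y $$ (k,j))"
    by (rule mult_mat_index_sum[of _ deg deg _ deg]) (use i j in auto)
  ultimately show "mult_matrix (x * y) $$ (i, j) = (mult_matrix x * mult_matrix y) $$ (i, j)"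
    using i j by (simp add: mult.commute)
qed auto

lemma mult_matrix_1: "mult_matrix 1 = 1\<^sub>m deg"
  by (rule eq_matI) (auto simp: coord_Qbasis_list)

lemma mult_matrix_of_rat: "mult_matrix (of_rat q) = q \<cdot>\<^sub>m 1\<^sub>m deg"
  by (rule eq_matI) (auto simp: coord_scale coord_Qbasis_list Qbasis_list_in_K)

lemma mult_matrix_lincomb: assumes x: "x \<in> K" and i: "i < deg" and j: "j < deg"
  shows "mult_matrix x $$ (i,j) = (\<Sum>l<deg. coord x l * mult_matrix (Qbasis_list ! l) $$ (i,j))"
proof -
  have "x * Qbasis_list ! j = (\<Sum>l<deg. of_rat (coord x l) * Qbasis_list ! l) * Qbasis_list ! j"
    using coord_expansion[OF x] by simp
  also have "\<dots> = (\<Sum>l<deg. of_rat (coord x l) * (Qbasis_list ! l * Qbasis_list ! j))"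
    unfolding sum_distrib_right by (simp add: mult.assoc)
  finally have e2: "x * Qbasis_list ! j = (\<Sum>l<deg. of_rat (coord x l) * (Qbasis_list ! l * Qbasis_list ! j))" .
  have "coord (x * Qbasis_list ! j) i = (\<Sum>l<deg. coord x l * coord (Qbasis_list ! l * Qbasis_list ! j) i)"
    unfolding e2 by (rule coord_lincomb) (simp add: Qbasis_list_in_K j)
  then show ?thesis using i j by simp
qed

definition mult_matrix_complex :: "real \<Rightarrow> complex mat" where "mult_matrix_complex x =
    map_mat of_rat (mult_matrix x)"
definition mult_matrix_real :: "real \<Rightarrow> real mat" where "mult_matrix_real x = map_mat of_rat (mult_matrix x)"

lemma mult_matrix_complex_carrier[simp]: "mult_matrix_complex x \<in> carrier_mat deg deg"
  and mult_matrix_real_carrier[simp]: "mult_matrix_real x \<in> carrier_mat deg deg"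
  by (auto simp: mult_matrix_complex_def mult_matrix_real_def)

lemma mult_matrix_real_dims[simp]: "dim_row (mult_matrix_real x) = deg" "dim_col (mult_matrix_real x) = deg"
  and mult_matrix_complex_dims[simp]: "dim_row (mult_matrix_complex x) = deg" "dim_col (mult_matrix_complex x) = deg"
  by (auto simp: mult_matrix_real_def mult_matrix_complex_def)

lemma mult_matrix_complex_add: "x \<in> K \<Longrightarrow> y \<in> K \<Longrightarrow>
    mult_matrix_complex (x + y) = mult_matrix_complex x + mult_matrix_complex y"
  unfolding mult_matrix_complex_def mult_matrix_add by (rule eq_matI) (auto simp: of_rat_add)

lemma mult_matrix_complex_mult: "x \<in> K \<Longrightarrow> y \<in> K \<Longrightarrow>
    mult_matrix_complex (x * y) = mult_matrix_complex x * mult_matrix_complex y"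
  unfolding mult_matrix_complex_def mult_matrix_mult by (rule of_rat_hom.mat_hom_mult) auto

lemma mult_matrix_complex_commute: "x \<in> K \<Longrightarrow> y \<in> K \<Longrightarrow>
    mult_matrix_complex x * mult_matrix_complex y = mult_matrix_complex y * mult_matrix_complex x"
  using mult_matrix_complex_mult[of x y] mult_matrix_complex_mult[of y x] by (simp add: mult.commute)

lemma mult_matrix_complex_1: "mult_matrix_complex 1 = 1\<^sub>m deg"
  unfolding mult_matrix_complex_def mult_matrix_1 by (rule eq_matI) auto

lemma mult_matrix_complex_of_rat: "mult_matrix_complex (of_rat q) = of_rat q \<cdot>\<^sub>m 1\<^sub>m deg"
  unfolding mult_matrix_complex_def mult_matrix_of_rat by (rule eq_matI) auto

lemma mult_matrix_complex_0: "mult_matrix_complex 0 = 0\<^sub>m deg deg"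
  using mult_matrix_complex_of_rat[of 0] by (simp) (rule eq_matI, auto)

definition basis_vec :: "real vec" where "basis_vec = vec deg (\<lambda>l. Qbasis_list ! l)"

lemma basis_vec_carrier[simp]: "basis_vec \<in> carrier_vec deg"
  by (simp add: basis_vec_def)

lemma basis_vec_nonzero: "basis_vec \<noteq> 0\<^sub>v deg"
proof
  assume "basis_vec = 0\<^sub>v deg"
  then have "basis_vec $ 0 = 0" using deg_pos by simp
  then show False using deg_pos Qbasis_list_nonzero[of 0] by (simp add: basis_vec_def)
qed

lemma basis_vec_eigen: assumes x: "x \<in> K" shows "transpose_mat (mult_matrix_real x) *\<^sub>v basis_vec = x \<cdot>\<^sub>v basis_vec"
proof (rule eq_vecI)
  fix j assume "j < dim_vec (x \<cdot>\<^sub>v basis_vec)"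
  then have j: "j < deg" by (simp add: basis_vec_def)
  have "(transpose_mat (mult_matrix_real x) *\<^sub>v basis_vec) $ j =
      (\<Sum>i<deg. transpose_mat (mult_matrix_real x) $$ (j,i) * basis_vec $ i)"
    by (rule mult_mat_vec_index_sum[of _ deg deg]) (use j in auto)
  also have "\<dots> = (\<Sum>i<deg. of_rat (coord (x * Qbasis_list ! j) i) * Qbasis_list ! i)"
    by (intro sum.cong) (use j in \<open>auto simp: mult_matrix_real_def basis_vec_def\<close>)
  also have "\<dots> = x * Qbasis_list ! j"
    by (rule coord_expansion[symmetric]) (simp add: x Qbasis_list_in_K j)
  finally show "(transpose_mat (mult_matrix_real x) *\<^sub>v basis_vec) $ j =
      (x \<cdot>\<^sub>v basis_vec) $ j" using j by (simp add: basis_vec_def)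
qed (simp add: mult_matrix_real_def basis_vec_def)

definition field_char_poly :: "real \<Rightarrow> rat poly" where "field_char_poly x = char_poly (mult_matrix x)"

lemma field_char_poly_monic: "lead_coeff (field_char_poly x) = 1" "degree (field_char_poly x) = deg"
  using degree_monic_char_poly[OF mult_matrix_carrier[of x]] by (auto simp: field_char_poly_def)

lemma field_char_poly_nonzero: "field_char_poly x \<noteq> 0"
  using field_char_poly_monic(1)[of x] by auto

lemma field_char_poly_root: assumes x: "x \<in> K" shows "poly (map_poly of_rat (field_char_poly x)) x = 0"
proof -
  have T: "transpose_mat (mult_matrix_real x) \<in> carrier_mat deg deg" by simp
  have "eigenvector (transpose_mat (mult_matrix_real x)) basis_vec x"
    unfolding eigenvector_def using basis_vec_eigen[OF x] basis_vec_nonzero by simp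
  then have "eigenvalue (transpose_mat (mult_matrix_real x)) x" unfolding eigenvalue_def by blast
  then have "poly (char_poly (transpose_mat (mult_matrix_real x))) x = 0" using eigenvalue_root_char_poly[OF T] by simp
  also have "char_poly (transpose_mat (mult_matrix_real x)) = char_poly (mult_matrix_real x)"
    by (rule char_poly_transpose_mat[OF mult_matrix_real_carrier])
  also have "char_poly (mult_matrix_real x) = map_poly of_rat (field_char_poly x)"
    unfolding mult_matrix_real_def field_char_poly_def by (rule of_rat_hom.char_poly_hom[OF mult_matrix_carrier])
  finally show ?thesis .
qed

lemma embedding_1: "field_embedding K \<tau> \<Longrightarrow> \<tau> 1 = 1"
  and embedding_add: "field_embedding K \<tau> \<Longrightarrow> x \<in> K \<Longrightarrow>
      y \<in> K \<Longrightarrow> \<tau> (x + y) = \<tau> x + \<tau> y"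
  and embedding_mult: "field_embedding K \<tau> \<Longrightarrow> x \<in> K \<Longrightarrow>
      y \<in> K \<Longrightarrow> \<tau> (x * y) = \<tau> x * \<tau> y"
  unfolding field_embedding_def by auto

lemma embedding_0: "field_embedding K \<tau> \<Longrightarrow> \<tau> 0 = 0"
  using embedding_add[of \<tau> 0 0] by simp

lemma embedding_uminus: "field_embedding K \<tau> \<Longrightarrow> x \<in> K \<Longrightarrow>
    \<tau> (- x) = - \<tau> x"
  using embedding_add[of \<tau> x "-x"] embedding_0[of \<tau>] by (simp add: eq_neg_iff_add_eq_0 add.commute)

lemma embedding_of_nat: "field_embedding K \<tau> \<Longrightarrow> \<tau> (of_nat n) = of_nat n"
proof (induction n)
  case 0
  then show ?case using embedding_0 by simp
next
  case (Suc n)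
  have "\<tau> (of_nat (Suc n)) = \<tau> (1 + of_nat n)" by simp
  also have "\<dots> = 1 + of_nat n" using Suc embedding_add[of \<tau> 1 "of_nat n"] embedding_1[of \<tau>] by simp
  finally show ?case by simp
qed

lemma embedding_of_int: "field_embedding K \<tau> \<Longrightarrow> \<tau> (of_int k) = of_int k"
proof (cases "k \<ge> 0")
  case True
  assume e: "field_embedding K \<tau>"
  have "(of_int k :: real) = of_nat (nat k)" using True by simp
  then show ?thesis using embedding_of_nat[OF e, of "nat k"] True by simp
next
  case False
  assume e: "field_embedding K \<tau>"
  have "(of_int k :: real) = - of_nat (nat (-k))" using False by simp
  then show ?thesis using embedding_of_nat[OF e, of "nat (-k)"] embedding_uminus[OF e, of "of_nat (nat (-k))"] False by simp
qed

lemma embedding_of_rat: assumes e: "field_embedding K \<tau>" shows "\<tau> (of_rat q) = of_rat q"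
proof -
  obtain a b where ab: "quotient_of q = (a, b)" by (cases "quotient_of q")
  have b: "b > 0" using quotient_of_denom_pos[OF ab] .
  have q: "q = of_int a / of_int b" using quotient_of_div[OF ab] .
  have "(of_rat q :: real) * of_int b = of_int a" using b by (simp add: q of_rat_divide)
  then have "\<tau> (of_rat q) * of_int b = of_int a"
    using embedding_mult[OF e, of "of_rat q" "of_int b"] embedding_of_int[OF e] by simp
  then have "\<tau> (of_rat q) = of_int a / of_int b" using b by (simp add: field_simps)
  also have "\<dots> = of_rat q" by (simp add: q of_rat_divide)
  finally show ?thesis .
qed

lemma embedding_sum: "field_embedding K \<tau> \<Longrightarrow> (\<And>i. i \<in> I \<Longrightarrow> f i \<in> K) \<Longrightarrow>
    \<tau> (sum f I) = (\<Sum>i\<in>I. \<tau> (f i))"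
proof (induction I rule: infinite_finite_induct)
  case (infinite A)
  then show ?case using embedding_0 by simp
next
  case empty
  then show ?case using embedding_0 by simp
next
  case (insert x F)
  then show ?case using embedding_add[of \<tau> "f x" "sum f F"] by (simp add: K_sum)
qed

lemma embedding_poly: assumes e: "field_embedding K \<tau>" and x: "x \<in> K"
  shows "\<tau> (poly (map_poly of_rat p) x) = poly (map_poly of_rat p) (\<tau> x)"
proof (induction p rule: pCons_induct)
  case 0
  then show ?case using embedding_0[OF e] by simp
next
  case (pCons a p)
  have y: "poly (map_poly of_rat p) x \<in> K" by (rule K_poly_of_rat[OF x])
  have "\<tau> (poly (map_poly of_rat (pCons a p)) x) = \<tau> (of_rat a + x * poly (map_poly of_rat p) x)"
    using pCons.hyps by (simp add: map_poly_pCons)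
  also have "\<dots> = of_rat a + \<tau> x * \<tau> (poly (map_poly of_rat p) x)"
    using y x by (simp add: embedding_add[OF e] embedding_mult[OF e] embedding_of_rat[OF e])
  also have "\<dots> = poly (map_poly of_rat (pCons a p)) (\<tau> x)"
    using pCons.hyps pCons.IH by (simp add: map_poly_pCons)
  finally show ?case .
qed

lemma embedding_root_field_char_poly: "field_embedding K \<tau> \<Longrightarrow>
    x \<in> K \<Longrightarrow> poly (map_poly of_rat (field_char_poly x)) (\<tau> x) = 0"
  using embedding_poly[of \<tau> x "field_char_poly x"] field_char_poly_root[of x] embedding_0[of \<tau>] by simp

lemma map_poly_of_rat_of_int:
  "map_poly (of_rat :: rat \<Rightarrow> 'a::field_char_0) (map_poly of_int p) = map_poly of_int p"
  by (simp add: map_poly_map_poly o_def)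

lemma embedding_algebraic_int: assumes e: "field_embedding K \<tau>" and x: "x \<in> K" and a: "algebraic_int x"
  shows "algebraic_int (\<tau> x)"
proof -
  obtain p :: "int poly" where p: "poly (map_poly of_int p) x = 0" "lead_coeff p = 1"
    using a by (auto simp: algebraic_int_altdef_ipoly)
  have "poly (map_poly of_rat (map_poly of_int p)) (\<tau> x) = \<tau> (poly (map_poly of_rat (map_poly of_int p)) x)"
    using embedding_poly[OF e x] by simp
  also have "\<dots> = 0" using p(1) embedding_0[OF e] by (simp add: map_poly_of_rat_of_int)
  finally have "poly (map_poly of_int p) (\<tau> x) = 0" by (simp add: map_poly_of_rat_of_int)
  then show ?thesis using p(2) by (auto simp: algebraic_int_altdef_ipoly)
qed

lemma embeddings_bounded: assumes x: "x \<in> K" shows "\<exists>R. \<forall>\<tau>. field_embedding K \<tau> \<longrightarrow> cmod (\<tau> x) \<le> R"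
proof -
  define P where "P = (map_poly of_rat (field_char_poly x) :: complex poly)"
  have "P \<noteq> 0" unfolding P_def using field_char_poly_nonzero[of x] by simp
  then have fin: "finite {z. poly P z = 0}" by (rule poly_roots_finite)
  define R where "R = Max (cmod ` {z. poly P z = 0})"
  have "cmod (\<tau> x) \<le> R" if e: "field_embedding K \<tau>" for \<tau>
  proof -
    have "\<tau> x \<in> {z. poly P z = 0}" using embedding_root_field_char_poly[OF e x] unfolding P_def by simp
    then show ?thesis unfolding R_def using fin by (intro Max_ge) auto
  qed
  then show ?thesis by blast
qed

lemma poly_mat_vec_mult_matrix_complex: assumes b: "\<beta> \<in> K" and v: "v \<in> carrier_vec deg"
  shows "poly_mat_vec (mult_matrix_complex \<beta>) (map_poly of_rat p) v =
      mult_matrix_complex (poly (map_poly of_rat p) \<beta>) *\<^sub>v v"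
proof (induction p rule: pCons_induct)
  case 0
  then show ?case using v by (simp add: mult_matrix_complex_0)
next
  case (pCons a p)
  define y where "y = poly (map_poly of_rat p) \<beta>"
  have y: "y \<in> K" unfolding y_def by (rule K_poly_of_rat[OF b])
  have "poly_mat_vec (mult_matrix_complex \<beta>) (map_poly of_rat (pCons a p)) v =
      of_rat a \<cdot>\<^sub>v v + mult_matrix_complex \<beta> *\<^sub>v (mult_matrix_complex y *\<^sub>v v)"
    using pCons.hyps pCons.IH v by (simp add: map_poly_pCons poly_mat_vec_pCons[OF mult_matrix_complex_carrier v] y_def)
  also have "\<dots> = mult_matrix_complex (of_rat a + \<beta> * y) *\<^sub>v v"
  proof -
    have "mult_matrix_complex (of_rat a + \<beta> * y) =
        of_rat a \<cdot>\<^sub>m 1\<^sub>m deg + mult_matrix_complex \<beta> * mult_matrix_complex y"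
      using y b by (simp add: mult_matrix_complex_add mult_matrix_complex_mult mult_matrix_complex_of_rat)
    moreover have "(of_rat a \<cdot>\<^sub>m 1\<^sub>m deg + mult_matrix_complex \<beta> * mult_matrix_complex y) *\<^sub>v v
        = (of_rat a \<cdot>\<^sub>m 1\<^sub>m deg) *\<^sub>v v + (mult_matrix_complex \<beta> * mult_matrix_complex y) *\<^sub>v v"
      by (rule add_mult_distrib_mat_vec[of _ deg deg]) (use v in auto)
    moreover have "(of_rat a \<cdot>\<^sub>m 1\<^sub>m deg) *\<^sub>v v = of_rat a \<cdot>\<^sub>v v"
      using v by (simp add: smult_mat_mult_vec[of _ deg deg])
    moreover have "(mult_matrix_complex \<beta> * mult_matrix_complex y) *\<^sub>v v =
        mult_matrix_complex \<beta> *\<^sub>v (mult_matrix_complex y *\<^sub>v v)"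
      by (rule assoc_mult_mat_vec[of _ deg deg]) (use v in auto)
    ultimately show ?thesis by simp
  qed
  also have "of_rat a + \<beta> * y = poly (map_poly of_rat (pCons a p)) \<beta>"
    using pCons.hyps by (simp add: map_poly_pCons y_def)
  finally show ?case .
qed

lemma mult_matrix_complex_commute_vec: "x \<in> K \<Longrightarrow> y \<in> K \<Longrightarrow>
    u \<in> carrier_vec deg \<Longrightarrow> mult_matrix_complex x *\<^sub>v (mult_matrix_complex y *\<^sub>v u) = mult_matrix_complex y *\<^sub>v (mult_matrix_complex x *\<^sub>v u)"
proof -
  assume x: "x \<in> K" and y: "y \<in> K" and u: "u \<in> carrier_vec deg"
  have "mult_matrix_complex x *\<^sub>v (mult_matrix_complex y *\<^sub>v u) =
      (mult_matrix_complex x * mult_matrix_complex y) *\<^sub>v u" by (rule assoc_mult_mat_vec[symmetric, of _ deg deg]) (use u in auto)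
  also have "\<dots> = (mult_matrix_complex y * mult_matrix_complex x) *\<^sub>v u"
    using mult_matrix_complex_commute[OF x y] by simp
  also have "\<dots> = mult_matrix_complex y *\<^sub>v (mult_matrix_complex x *\<^sub>v u)"
    by (rule assoc_mult_mat_vec[of _ deg deg]) (use u in auto)
  finally show ?thesis .
qed

lemma field_char_poly_split: "\<exists>rs. (map_poly of_rat (field_char_poly x) :: complex poly) =
    (\<Prod>\<rho>\<leftarrow>rs. [:-\<rho>, 1:])"
proof -
  obtain rs where "Polynomial.smult (lead_coeff (map_poly of_rat (field_char_poly x) :: complex poly)) (\<Prod>\<rho>\<leftarrow>rs. [:-\<rho>, 1:]) = map_poly of_rat (field_char_poly x)"
    using fundamental_theorem_algebra_factorized by blast
  moreover have "lead_coeff (map_poly of_rat (field_char_poly x) :: complex poly) = 1"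
    using field_char_poly_monic[of x] by (simp add: degree_map_poly coeff_map_poly)
  ultimately show ?thesis by (metis smult_1_left)
qed

lemma mult_matrix_complex_eigenvector_in_invariant_subspace:
  assumes \<beta>: "\<beta> \<in> K" and W: "vec_subspace deg W"
    and inv: "\<And>u. u \<in> W \<Longrightarrow> mult_matrix_complex \<beta> *\<^sub>v u \<in> W"
      and v: "v \<in> W" "v \<noteq> 0\<^sub>v deg"
  obtains \<zeta> u where "u \<in> W" "u \<noteq> 0\<^sub>v deg" "mult_matrix_complex \<beta> *\<^sub>v u = \<zeta> \<cdot>\<^sub>v u"
proof -
  have vc: "v \<in> carrier_vec deg" using v(1) vec_subspaceD(1)[OF W] by auto
  obtain rs where rs: "(map_poly of_rat (field_char_poly \<beta>) :: complex poly) =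
      (\<Prod>\<rho>\<leftarrow>rs. [:-\<rho>, 1:])"
    using field_char_poly_split by blast
  have "poly_mat_vec (mult_matrix_complex \<beta>) (\<Prod>\<rho>\<leftarrow>rs. [:-\<rho>, 1:]) v
      = mult_matrix_complex (poly (map_poly of_rat (field_char_poly \<beta>)) \<beta>) *\<^sub>v v"
    unfolding rs[symmetric] by (rule poly_mat_vec_mult_matrix_complex[OF \<beta> vc])
  also have "\<dots> = 0\<^sub>v deg" using field_char_poly_root[OF \<beta>] vc by (simp add: mult_matrix_complex_0)
  finally obtain \<zeta> u where "u \<in> W" "u \<noteq> 0\<^sub>v deg" "mult_matrix_complex \<beta> *\<^sub>v u = \<zeta> \<cdot>\<^sub>v u"
    using linear_factors_annihilate_imp_eigenvector[OF mult_matrix_complex_carrier W inv v] by blast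
  then show ?thesis by (rule that)
qed

lemma mult_matrix_complex_preserves_eigenspace:
  assumes "x \<in> K" "y \<in> K" "u \<in> carrier_vec deg"
    and "mult_matrix_complex y *\<^sub>v u = \<mu> \<cdot>\<^sub>v u"
  shows "mult_matrix_complex y *\<^sub>v (mult_matrix_complex x *\<^sub>v u) =
      \<mu> \<cdot>\<^sub>v (mult_matrix_complex x *\<^sub>v u)"
  using assms by (simp add: mult_matrix_complex_commute_vec[of y x] mult_mat_vec_smult[of _ deg deg])

text \<open>The multiplication matrices commute, so each eigenvector of one of them can be refined,
  one basis element at a time, to a common eigenvector of all of them.\<close>

lemma common_eigenvector:
  assumes a: "a \<in> K" and eig: "eigenvalue (mult_matrix_complex a) lam"
  shows "k \<le> deg \<Longrightarrow> \<exists>v \<mu>. v \<in> carrier_vec deg \<and>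
      v \<noteq> 0\<^sub>v deg \<and> mult_matrix_complex a *\<^sub>v v = lam \<cdot>\<^sub>v v \<and>
     (\<forall>l<k. mult_matrix_complex (Qbasis_list ! l) *\<^sub>v v = \<mu> l \<cdot>\<^sub>v v)"
proof (induction k)
  case 0
  then show ?case using eig unfolding eigenvalue_def eigenvector_def by auto
next
  case (Suc k)
  then obtain v \<mu> where v: "v \<in> carrier_vec deg" "v \<noteq> 0\<^sub>v deg" "mult_matrix_complex a *\<^sub>v v = lam \<cdot>\<^sub>v v"
    "\<forall>l<k. mult_matrix_complex (Qbasis_list ! l) *\<^sub>v v = \<mu> l \<cdot>\<^sub>v v" by auto
  have k: "k < deg" using Suc by simp
  define W where "W = {u \<in> carrier_vec deg. mult_matrix_complex a *\<^sub>v u = lam \<cdot>\<^sub>v u \<and>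
    (\<forall>l<k. mult_matrix_complex (Qbasis_list ! l) *\<^sub>v u = \<mu> l \<cdot>\<^sub>v u)}"
  have W: "vec_subspace deg W"
    unfolding vec_subspace_def
  proof (intro conjI ballI allI)
    fix u w assume "u \<in> W" "w \<in> W"
    then show "u + w \<in> W" unfolding W_def
      by (auto simp: mult_add_distrib_mat_vec[of _ deg deg] smult_add_distrib_vec[of _ deg])
  next
    fix c u assume "u \<in> W"
    then show "c \<cdot>\<^sub>v u \<in> W" unfolding W_def
      by (auto simp: mult_mat_vec_smult[of _ deg deg] smult_smult_assoc mult.commute)
  qed (auto simp: W_def)
  have inv: "mult_matrix_complex (Qbasis_list ! k) *\<^sub>v u \<in> W" if u: "u \<in> W" for u
  proof -
    have uc: "u \<in> carrier_vec deg" using u by (simp add: W_def)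
    let ?w = "mult_matrix_complex (Qbasis_list ! k) *\<^sub>v u"
    have "mult_matrix_complex a *\<^sub>v ?w = lam \<cdot>\<^sub>v ?w"
      using u by (simp add: W_def mult_matrix_complex_preserves_eigenspace[OF Qbasis_list_in_K[OF k] a uc])
    moreover have "mult_matrix_complex (Qbasis_list ! l) *\<^sub>v ?w = \<mu> l \<cdot>\<^sub>v ?w" if "l < k" for l
      using u that k mult_matrix_complex_preserves_eigenspace[OF Qbasis_list_in_K[OF k] Qbasis_list_in_K[of l] uc]
      by (simp add: W_def)
    ultimately show ?thesis using uc by (simp add: W_def mult_mat_vec_carrier[OF mult_matrix_complex_carrier])
  qed
  have vW: "v \<in> W" using v by (simp add: W_def)
  obtain \<zeta> u where u: "u \<in> W" "u \<noteq> 0\<^sub>v deg" "mult_matrix_complex (Qbasis_list ! k) *\<^sub>v u = \<zeta> \<cdot>\<^sub>v u"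
    by (rule mult_matrix_complex_eigenvector_in_invariant_subspace[OF Qbasis_list_in_K[OF k] W inv vW v(2)])
  show ?case
  proof (intro exI conjI)
    show "u \<in> carrier_vec deg" "u \<noteq> 0\<^sub>v deg" "mult_matrix_complex a *\<^sub>v u = lam \<cdot>\<^sub>v u"
      using u by (auto simp: W_def)
    show "\<forall>l<Suc k. mult_matrix_complex (Qbasis_list ! l) *\<^sub>v u =
        (\<mu>(k := \<zeta>)) l \<cdot>\<^sub>v u"
      using u by (auto simp: W_def less_Suc_eq)
  qed
qed

lemma mult_matrix_complex_lincomb: assumes x: "x \<in> K" and i: "i < deg" and j: "j < deg"
  shows "mult_matrix_complex x $$ (i,j)
    = (\<Sum>l<deg. of_rat (coord x l) * mult_matrix_complex (Qbasis_list ! l) $$ (i,j))"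
proof -
  have "mult_matrix_complex x $$ (i,j) = of_rat (mult_matrix x $$ (i,j))" using i j
    by (simp add: mult_matrix_complex_def)
  also have "\<dots> = of_rat (\<Sum>l<deg. coord x l * mult_matrix (Qbasis_list ! l) $$ (i,j))"
    by (simp only: mult_matrix_lincomb[OF x i j])
  also have "\<dots> = (\<Sum>l<deg. of_rat (coord x l) * of_rat (mult_matrix (Qbasis_list ! l) $$ (i,j)))"
    by (simp add: of_rat_sum of_rat_mult)
  also have "\<dots> = (\<Sum>l<deg. of_rat (coord x l) * mult_matrix_complex (Qbasis_list ! l) $$ (i,j))"
    by (intro sum.cong refl) (use i j in \<open>simp add: mult_matrix_complex_def\<close>)
  finally show ?thesis .
qed

lemma mult_matrix_complex_common_eigenvector:
  assumes x: "x \<in> K" and v: "v \<in> carrier_vec deg"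
    and eig: "\<forall>l<deg. mult_matrix_complex (Qbasis_list ! l) *\<^sub>v v = \<mu> l \<cdot>\<^sub>v v"
  shows "mult_matrix_complex x *\<^sub>v v = (\<Sum>l<deg. of_rat (coord x l) * \<mu> l) \<cdot>\<^sub>v v"
proof (rule eq_vecI)
  fix i assume "i < dim_vec ((\<Sum>l<deg. of_rat (coord x l) * \<mu> l) \<cdot>\<^sub>v v)"
  then have i: "i < deg" using v by simp
  have "(mult_matrix_complex x *\<^sub>v v) $ i = (\<Sum>j<deg. mult_matrix_complex x $$ (i,j) * v $ j)"
    by (rule mult_mat_vec_index_sum[of _ deg deg]) (use v i in auto)
  also have "\<dots> = (\<Sum>j<deg.
      (\<Sum>l<deg. of_rat (coord x l) * mult_matrix_complex (Qbasis_list ! l) $$ (i,j)) * v $ j)"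
    by (intro sum.cong refl) (use i in \<open>simp add: mult_matrix_complex_lincomb[OF x]\<close>)
  also have "\<dots> = (\<Sum>j<deg. \<Sum>l<deg.
      of_rat (coord x l) * (mult_matrix_complex (Qbasis_list ! l) $$ (i,j) * v $ j))"
    by (simp add: sum_distrib_right mult.assoc)
  also have "\<dots> = (\<Sum>l<deg. \<Sum>j<deg.
      of_rat (coord x l) * (mult_matrix_complex (Qbasis_list ! l) $$ (i,j) * v $ j))"
    by (rule sum.swap)
  also have "\<dots> = (\<Sum>l<deg.
      of_rat (coord x l) * (\<Sum>j<deg. mult_matrix_complex (Qbasis_list ! l) $$ (i,j) * v $ j))"
    by (simp add: sum_distrib_left)
  also have "\<dots> = (\<Sum>l<deg. of_rat (coord x l) * (\<mu> l * v $ i))"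
  proof (intro sum.cong refl)
    fix l assume "l \<in> {..<deg}"
    then have l: "l < deg" by simp
    have "(\<Sum>j<deg. mult_matrix_complex (Qbasis_list ! l) $$ (i,j) * v $ j) =
        (mult_matrix_complex (Qbasis_list ! l) *\<^sub>v v) $ i"
      by (rule mult_mat_vec_index_sum[symmetric, of _ deg deg]) (use v i in auto)
    also have "\<dots> = \<mu> l * v $ i" using v eig l i by simp
    finally show "of_rat (coord x l) * (\<Sum>j<deg. mult_matrix_complex (Qbasis_list ! l) $$ (i,j) * v $ j)
        = of_rat (coord x l) * (\<mu> l * v $ i)" by simp
  qed
  also have "\<dots> = ((\<Sum>l<deg. of_rat (coord x l) * \<mu> l) \<cdot>\<^sub>v v) $ i"
    using v i by (simp add: sum_distrib_right mult.assoc)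
  finally show "(mult_matrix_complex x *\<^sub>v v) $ i =
      ((\<Sum>l<deg. of_rat (coord x l) * \<mu> l) \<cdot>\<^sub>v v) $ i" .
qed (use v in auto)

lemma eigenvalue_is_embedding:
  assumes a: "a \<in> K" and eig: "eigenvalue (mult_matrix_complex a) lam"
  shows "\<exists>\<tau>. field_embedding K \<tau> \<and> \<tau> a = lam"
proof -
  obtain v \<mu> where v: "v \<in> carrier_vec deg" "v \<noteq> 0\<^sub>v deg" "mult_matrix_complex a *\<^sub>v v = lam \<cdot>\<^sub>v v"
    "\<forall>l<deg. mult_matrix_complex (Qbasis_list ! l) *\<^sub>v v = \<mu> l \<cdot>\<^sub>v v"
      using common_eigenvector[OF a eig order_refl] by blast
  define \<tau> where "\<tau> x = (\<Sum>l<deg. of_rat (coord x l) * \<mu> l)" for x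
  have key: "mult_matrix_complex x *\<^sub>v v = \<tau> x \<cdot>\<^sub>v v" if "x \<in> K" for x
    unfolding \<tau>_def using mult_matrix_complex_common_eigenvector[OF that v(1) v(4)] .
  have "field_embedding K \<tau>"
    unfolding field_embedding_def
  proof (intro conjI ballI)
    have "1 \<cdot>\<^sub>v v = \<tau> 1 \<cdot>\<^sub>v v" using key[OF K_1] v(1) by (simp add: mult_matrix_complex_1)
    then show "\<tau> 1 = 1" using smult_vec_right_cancel v by metis
  next
    fix x y assume x: "x \<in> K" and y: "y \<in> K"
    have "\<tau> (x + y) \<cdot>\<^sub>v v = (\<tau> x + \<tau> y) \<cdot>\<^sub>v v"
      using key[OF K_add[OF x y]] key[OF x] key[OF y] v(1)
      by (simp add: mult_matrix_complex_add[OF x y] add_mult_distrib_mat_vec[of _ deg deg] add_smult_distrib_vec)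
    then show "\<tau> (x + y) = \<tau> x + \<tau> y" using smult_vec_right_cancel v by metis
    have "\<tau> (x * y) \<cdot>\<^sub>v v = (\<tau> x * \<tau> y) \<cdot>\<^sub>v v"
    proof -
      have "(mult_matrix_complex x * mult_matrix_complex y) *\<^sub>v v =
          mult_matrix_complex x *\<^sub>v (mult_matrix_complex y *\<^sub>v v)"
        by (rule assoc_mult_mat_vec[of _ deg deg]) (use v(1) in auto)
      then have "\<tau> (x * y) \<cdot>\<^sub>v v = mult_matrix_complex x *\<^sub>v (mult_matrix_complex y *\<^sub>v v)"
        using key[OF K_mult[OF x y]] by (simp add: mult_matrix_complex_mult[OF x y])
      also have "\<dots> = \<tau> y \<cdot>\<^sub>v (\<tau> x \<cdot>\<^sub>v v)"
        using key[OF x] key[OF y] v(1) by (simp add: mult_mat_vec_smult[of _ deg deg])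
      finally show ?thesis by (simp add: smult_smult_assoc mult.commute)
    qed
    then show "\<tau> (x * y) = \<tau> x * \<tau> y" using smult_vec_right_cancel v by metis
  qed
  moreover have "\<tau> a = lam"
    using key[OF a] v smult_vec_right_cancel by metis
  ultimately show ?thesis by blast
qed

lemma field_char_poly_coeff_bounded_int:
  assumes a: "a \<in> K" "algebraic_int a"
    and R: "\<forall>\<tau>. field_embedding K \<tau> \<longrightarrow> cmod (\<tau> a) \<le> R"
  shows "coeff (field_char_poly a) i \<in> \<int> \<and>
      \<bar>of_rat (coeff (field_char_poly a) i) :: real\<bar> \<le> (1 + R) ^ deg"
proof -
  have "char_poly (mult_matrix_complex a) = map_poly of_rat (field_char_poly a)"
    unfolding mult_matrix_complex_def field_char_poly_def by (rule of_rat_hom.char_poly_hom[OF mult_matrix_carrier])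
  moreover obtain rs where rs: "char_poly (mult_matrix_complex a) =
      (\<Prod>\<rho>\<leftarrow>rs. [:-\<rho>, 1:])" "length rs = deg"
    using char_poly_factorized[OF mult_matrix_complex_carrier] by blast
  ultimately have "map_poly of_rat (field_char_poly a) = (\<Prod>\<rho>\<leftarrow>rs. [:-\<rho>, 1:])" by simp
  from arg_cong[OF this, of "\<lambda>p. coeff p i"]
  have eq: "(of_rat (coeff (field_char_poly a) i) :: complex) = coeff (\<Prod>\<rho>\<leftarrow>rs. [:-\<rho>, 1:]) i"
    by (simp add: coeff_map_poly)
  have roots: "algebraic_int r \<and> cmod r \<le> R" if r: "r \<in> set rs" for r
  proof -
    have "poly (char_poly (mult_matrix_complex a)) r = 0" using rs(1) linear_poly_root[OF r] by simp
    then have "eigenvalue (mult_matrix_complex a) r"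
      using eigenvalue_root_char_poly[OF mult_matrix_complex_carrier] by simp
    then obtain \<tau> where "field_embedding K \<tau>" "\<tau> a = r" using eigenvalue_is_embedding[OF a(1)] by blast
    then show ?thesis using embedding_algebraic_int[OF _ a] R by auto
  qed
  have "algebraic_int (of_rat (coeff (field_char_poly a) i) :: complex)"
    unfolding eq by (rule algebraic_int_coeff_prod_linear_factors) (use roots in auto)
  moreover have "cmod (of_rat (coeff (field_char_poly a) i) :: complex) \<le> (1 + R) ^ deg"
    unfolding eq rs(2)[symmetric] by (rule norm_coeff_prod_linear_factors_le) (use roots in auto)
  ultimately show ?thesis
    using rat_in_Ints_if_algebraic_int by (simp flip: complex_of_real_of_rat)
qed

text \<open>Northcott-type finiteness: such an \<open>a\<close> is a root of its characteristic polynomial, which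
  has degree \<open>deg\<close> and integer coefficients bounded in terms of \<open>R\<close>.\<close>

lemma finite_algebraic_ints_bounded_conjugates:
  "finite {a \<in> K. algebraic_int a \<and>
      (\<forall>\<tau>. field_embedding K \<tau> \<longrightarrow> cmod (\<tau> a) \<le> R)}"
proof (rule finite_subset)
  define S where "S = {p :: rat poly. degree p \<le> deg \<and>
    (\<forall>i\<le>deg. coeff p i \<in> {q. q \<in> \<int> \<and> \<bar>of_rat q :: real\<bar> \<le> (1 + R) ^ deg})}"
  show "{a \<in> K. algebraic_int a \<and>
      (\<forall>\<tau>. field_embedding K \<tau> \<longrightarrow> cmod (\<tau> a) \<le> R)}
      \<subseteq> (\<Union>p\<in>S - {0}. {x. poly (map_poly of_rat p) x = 0})"
  proof
    fix a assume "a \<in> {a \<in> K. algebraic_int a \<and>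
        (\<forall>\<tau>. field_embedding K \<tau> \<longrightarrow> cmod (\<tau> a) \<le> R)}"
    then have a: "a \<in> K" "algebraic_int a" "\<forall>\<tau>. field_embedding K \<tau> \<longrightarrow> cmod (\<tau> a) \<le> R" by auto
    have "field_char_poly a \<in> S - {0}"
      using field_char_poly_coeff_bounded_int[OF a] field_char_poly_monic(2)[of a]
        field_char_poly_nonzero[of a] by (simp add: S_def)
    with field_char_poly_root[OF a(1)] show "a \<in> (\<Union>p\<in>S - {0}. {x. poly (map_poly of_rat p) x = 0})" by blast
  qed
  have "finite S" unfolding S_def by (intro finite_polys_with_coeffs_in finite_bounded_rat_Ints)
  then show "finite (\<Union>p\<in>S - {0}. {x::real. poly (map_poly of_rat p) x = 0})"
  proof (rule finite_UN_I[OF finite_Diff])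
    fix p :: "rat poly" assume "p \<in> S - {0}"
    then have "(map_poly of_rat p :: real poly) \<noteq> 0" by simp
    then show "finite {x::real. poly (map_poly of_rat p) x = 0}" by (rule poly_roots_finite)
  qed
qed

text \<open>\<open>c\<close> is an eigenvalue of the rational matrix \<open>transpose (mult_matrix c)\<close>; clearing its
  denominators gives an integer matrix with eigenvalue \<open>D c\<close>.\<close>

lemma exists_denominator:
  assumes c: "c \<in> K"
  shows "\<exists>D::int. D > 0 \<and> algebraic_int (of_int D * c)"
proof -
  obtain D :: int where D: "D > 0" "\<forall>q\<in>{mult_matrix c $$ (i,j) |i j. i < deg \<and>
      j < deg}. of_int D * q \<in> \<int>"
    using finite_rat_common_denominator[of "{mult_matrix c $$ (i,j) |i j. i < deg \<and> j < deg}"]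
    by (auto simp: finite_image_set2)
  define Z :: "int mat" where "Z = mat deg deg (\<lambda>(j,i). \<lfloor>of_int D * mult_matrix c $$ (i,j)\<rfloor>)"
  have Zc: "Z \<in> carrier_mat deg deg" by (simp add: Z_def)
  have "map_mat real_of_int Z = real_of_int D \<cdot>\<^sub>m transpose_mat (mult_matrix_real c)"
  proof (rule eq_matI)
    fix j i assume "j < dim_row (real_of_int D \<cdot>\<^sub>m transpose_mat (mult_matrix_real c))"
      "i < dim_col (real_of_int D \<cdot>\<^sub>m transpose_mat (mult_matrix_real c))"
    then have ij: "i < deg" "j < deg" by auto
    then have "of_int D * mult_matrix c $$ (i,j) \<in> \<int>" using D(2) by blast
    then have "(of_int (Z $$ (j,i)) :: rat) = of_int D * mult_matrix c $$ (i,j)"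
      using ij by (simp add: Z_def)
    from arg_cong[OF this, of "of_rat :: rat \<Rightarrow> real"]
    show "map_mat real_of_int Z $$ (j, i) =
        (real_of_int D \<cdot>\<^sub>m transpose_mat (mult_matrix_real c)) $$ (j, i)"
      using ij Zc by (simp add: mult_matrix_real_def of_rat_mult)
  qed (use Zc in auto)
  then have "map_mat of_int Z *\<^sub>v basis_vec = (of_int D * c) \<cdot>\<^sub>v basis_vec"
    by (simp add: smult_mat_mult_vec[of _ deg deg] basis_vec_eigen[OF c] smult_smult_assoc)
  then have "algebraic_int (of_int D * c)"
    by (rule algebraic_int_of_int_mat_eigenvalue[OF Zc basis_vec_carrier basis_vec_nonzero])
  then show ?thesis using D(1) by blast
qed

lemma exists_common_denominator: "(\<forall>j<(m::nat). c j \<in> K) \<Longrightarrow>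
    \<exists>D::int. D > 0 \<and> (\<forall>j<m. algebraic_int (of_int D * c j))"
proof (induction m)
  case 0
  then show ?case by (intro exI[of _ 1]) auto
next
  case (Suc m)
  then obtain D :: int where D: "D > 0" "\<forall>j<m. algebraic_int (of_int D * c j)" by auto
  obtain D' :: int where D': "D' > 0" "algebraic_int (of_int D' * c m)" using exists_denominator Suc.prems by blast
  have "algebraic_int (of_int (D * D') * c j)" if j: "j < Suc m" for j
  proof (cases "j < m")
    case True
    have "of_int (D * D') * c j = of_int D' * (of_int D * c j)" by simp
    moreover have "algebraic_int (of_int D' :: real)" by (rule int_imp_algebraic_int) simp
    ultimately show ?thesis using algebraic_int_times_real D(2) True by metis
  next
    case False
    then have jm: "j = m" using j by simp
    have "of_int (D * D') * c j = of_int D * (of_int D' * c m)" using jm by simp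
    moreover have "algebraic_int (of_int D :: real)" by (rule int_imp_algebraic_int) simp
    ultimately show ?thesis using algebraic_int_times_real D'(2) by metis
  qed
  then show ?case using D(1) D'(1) by (intro exI[of _ "D * D'"]) auto
qed

lemma real_embedding_field_embedding: "real_embedding K \<sigma> \<Longrightarrow>
    field_embedding K (\<lambda>x. complex_of_real (\<sigma> x))"
  unfolding real_embedding_def .

lemma real_embedding_mult: "real_embedding K \<sigma> \<Longrightarrow> x \<in> K \<Longrightarrow>
    y \<in> K \<Longrightarrow> \<sigma> (x * y) = \<sigma> x * \<sigma> y"
  using embedding_mult[OF real_embedding_field_embedding, of \<sigma> x y] by (metis of_real_mult of_real_eq_iff)

lemma real_embedding_sum: "real_embedding K \<sigma> \<Longrightarrow>
    (\<And>i. i \<in> I \<Longrightarrow> f i \<in> K) \<Longrightarrow> \<sigma> (sum f I) = (\<Sum>i\<in>I. \<sigma> (f i))"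
  using embedding_sum[OF real_embedding_field_embedding, of \<sigma> I f] by (metis of_real_sum of_real_eq_iff)

lemma Kvecs_carrier: "y \<in> Kvecs K n \<Longrightarrow> y \<in> carrier_vec n"
  and Kvecs_index: "y \<in> Kvecs K n \<Longrightarrow> i < n \<Longrightarrow> y $ i \<in> K"
  unfolding Kvecs_def by auto

lemma bil_in_K: assumes B: "B \<in> carrier_mat n n" and BK: "\<forall>i<n. \<forall>j<n. B $$ (i,j) \<in> K"
  and y: "y \<in> Kvecs K n" and u: "u \<in> Kvecs K n"
  shows "bil B y u \<in> K"
  unfolding bil_expand[OF B Kvecs_carrier[OF y] Kvecs_carrier[OF u]]
  using BK Kvecs_index[OF y] Kvecs_index[OF u] by (intro K_sum K_mult) auto

lemma real_embedding_bil: assumes s: "real_embedding K \<sigma>" and B: "B \<in> carrier_mat n n"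
  and BK: "\<forall>i<n. \<forall>j<n. B $$ (i,j) \<in> K"
  and y: "y \<in> Kvecs K n" and u: "u \<in> Kvecs K n"
  shows "\<sigma> (bil B y u) = bil (map_mat \<sigma> B) (map_vec \<sigma> y) (map_vec \<sigma> u)"
proof -
  have yc: "y \<in> carrier_vec n" and uc: "u \<in> carrier_vec n" using y u by (auto simp: Kvecs_def)
  have yK: "\<And>i. i < n \<Longrightarrow> y $ i \<in> K" and uK: "\<And>i. i < n \<Longrightarrow>
      u $ i \<in> K" using y u by (auto simp: Kvecs_def)
  have inner: "(\<Sum>j<n. B $$ (i,j) * u $ j) \<in> K" if "i < n" for i
    using BK uK that by (intro K_sum K_mult) auto
  have "\<sigma> (bil B y u) = \<sigma> (\<Sum>i<n. y $ i * (\<Sum>j<n. B $$ (i,j) * u $ j))"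
    unfolding bil_expand[OF B yc uc] ..
  also have "\<dots> = (\<Sum>i<n. \<sigma> (y $ i) * (\<Sum>j<n. \<sigma> (B $$ (i,j)) * \<sigma> (u $ j)))"
  proof -
    have "\<sigma> (\<Sum>i<n. y $ i * (\<Sum>j<n. B $$ (i,j) * u $ j)) =
        (\<Sum>i<n. \<sigma> (y $ i * (\<Sum>j<n. B $$ (i,j) * u $ j)))"
      by (rule real_embedding_sum[OF s]) (use yK inner in auto)
    also have "\<dots> = (\<Sum>i<n. \<sigma> (y $ i) * (\<Sum>j<n. \<sigma> (B $$ (i,j)) * \<sigma> (u $ j)))"
    proof (intro sum.cong refl)
      fix i assume "i \<in> {..<n}"
      then have i: "i < n" by simp
      have "\<sigma> (y $ i * (\<Sum>j<n. B $$ (i,j) * u $ j)) =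
          \<sigma> (y $ i) * \<sigma> (\<Sum>j<n. B $$ (i,j) * u $ j)"
        by (rule real_embedding_mult[OF s yK[OF i] inner[OF i]])
      also have "\<sigma> (\<Sum>j<n. B $$ (i,j) * u $ j) = (\<Sum>j<n. \<sigma> (B $$ (i,j) * u $ j))"
        by (rule real_embedding_sum[OF s]) (use BK uK i in auto)
      also have "\<dots> = (\<Sum>j<n. \<sigma> (B $$ (i,j)) * \<sigma> (u $ j))"
        by (intro sum.cong refl real_embedding_mult[OF s]) (use BK uK i in auto)
      finally show "\<sigma> (y $ i * (\<Sum>j<n. B $$ (i,j) * u $ j)) =
          \<sigma> (y $ i) * (\<Sum>j<n. \<sigma> (B $$ (i,j)) * \<sigma> (u $ j))" .
    qed
    finally show ?thesis .
  qed
  also have "\<dots> = bil (map_mat \<sigma> B) (map_vec \<sigma> y) (map_vec \<sigma> u)"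
    by (subst bil_expand[of _ n]) (use B yc uc in auto)
  finally show ?thesis .
qed

lemma embedding_eq_of_real_Re: "field_embedding K \<tau> \<Longrightarrow> x \<in> K \<Longrightarrow>
    \<tau> x = complex_of_real (Re (\<tau> x))"
proof -
  assume t: "field_embedding K \<tau>" and x: "x \<in> K"
  have "\<tau> x \<in> \<real>" using tr t x unfolding totally_real_def by blast
  then show ?thesis by (metis Reals_cases Re_complex_of_real)
qed

lemma real_embedding_Re: assumes t: "field_embedding K \<tau>" shows "real_embedding K (\<lambda>x. Re (\<tau> x))"
  unfolding real_embedding_def field_embedding_def
proof (intro conjI ballI)
  show "complex_of_real (Re (\<tau> 1)) = 1" using embedding_1[OF t] by simp
  fix x y assume x: "x \<in> K" and y: "y \<in> K"
  show "complex_of_real (Re (\<tau> (x + y))) = complex_of_real (Re (\<tau> x)) + complex_of_real (Re (\<tau> y))"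
    using embedding_eq_of_real_Re[OF t, of "x +
        y"] embedding_eq_of_real_Re[OF t x] embedding_eq_of_real_Re[OF t y] embedding_add[OF t x y] x y by simp
  show "complex_of_real (Re (\<tau> (x * y))) = complex_of_real (Re (\<tau> x)) * complex_of_real (Re (\<tau> y))"
    using embedding_eq_of_real_Re[OF t, of "x *
        y"] embedding_eq_of_real_Re[OF t x] embedding_eq_of_real_Re[OF t y] embedding_mult[OF t x y] x y by simp
qed

lemma admissible_formD: assumes "admissible_form K n B"
  shows "B \<in> carrier_mat n n" "transpose_mat B = B" "\<forall>i<n. \<forall>j<n. B $$ (i,j) \<in> K"
    "\<And>\<sigma>. real_embedding K \<sigma> \<Longrightarrow>
        (\<exists>x\<in>K. \<sigma> x \<noteq> x) \<Longrightarrow> (\<forall>x\<in>carrier_vec n. x \<noteq> 0\<^sub>v n \<longrightarrow> bil (map_mat \<sigma> B) x x > 0)"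
  using assms unfolding admissible_form_def by blast+

lemma real_embedding_bil_square_le:
  assumes adm: "admissible_form K n B" and \<sigma>: "real_embedding K \<sigma>"
    and nontrivial: "\<exists>x\<in>K. \<sigma> x \<noteq> x"
    and y: "y \<in> Kvecs K n" and u: "u \<in> Kvecs K n"
  shows "(\<sigma> (bil B y u))^2 \<le> \<sigma> (bil B y y) * \<sigma> (bil B u u)"
proof -
  note Bf = admissible_formD[OF adm]
  have B': "map_mat \<sigma> B \<in> carrier_mat n n" using Bf(1) by simp
  have "transpose_mat (map_mat \<sigma> B) = map_mat \<sigma> B"
    using Bf(1,2) by (metis map_mat_transpose)
  then have "(bil (map_mat \<sigma> B) (map_vec \<sigma> y) (map_vec \<sigma> u))^2
      \<le> bil (map_mat \<sigma> B) (map_vec \<sigma> y) (map_vec \<sigma> y) * bil (map_mat \<sigma> B) (map_vec \<sigma> u) (map_vec \<sigma> u)"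
    using Kvecs_carrier[OF y] Kvecs_carrier[OF u]
    by (intro bil_cauchy_schwarz[OF B' _ vec_subspace_carrier_vec Bf(4)[OF \<sigma> nontrivial]]) auto
  then show ?thesis by (simp add: real_embedding_bil[OF \<sigma> Bf(1) Bf(3)] y u)
qed

lemma embedding_bil_bound:
  assumes adm: "admissible_form K n B"
    and X: "vec_subspace n X"
    and pd: "\<forall>x\<in>X. x \<noteq> 0\<^sub>v n \<longrightarrow> bil B x x > 0"
    and yX: "y \<in> X" and yK: "y \<in> Kvecs K n" and uX: "u \<in> X" and uK: "u \<in> Kvecs K n"
    and yy: "bil B y y = c" and uu: "bil B u u = c"
    and t: "field_embedding K \<tau>"
  shows "cmod (\<tau> (bil B y u)) \<le> cmod (\<tau> c)"
proof -
  note Bf = admissible_formD[OF adm]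
  define \<sigma> where "\<sigma> x = Re (\<tau> x)" for x
  have \<sigma>: "real_embedding K \<sigma>" unfolding \<sigma>_def by (rule real_embedding_Re[OF t])
  define a where "a = bil B y u"
  have aK: "a \<in> K" unfolding a_def by (rule bil_in_K[OF Bf(1) Bf(3) yK uK])
  have cK: "c \<in> K" using bil_in_K[OF Bf(1) Bf(3) yK yK] yy by simp
  have "cmod (\<tau> a) = \<bar>\<sigma> a\<bar>" "cmod (\<tau> c) = \<bar>\<sigma> c\<bar>"
    using embedding_eq_of_real_Re[OF t aK] embedding_eq_of_real_Re[OF t cK] unfolding \<sigma>_def
      by (metis norm_of_real)+
  moreover have "(\<sigma> a)^2 \<le> \<sigma> c * \<sigma> c"
  proof (cases "\<exists>x\<in>K. \<sigma> x \<noteq> x")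
    case True
    then show ?thesis using real_embedding_bil_square_le[OF adm \<sigma> True yK uK] yy uu by (simp add: a_def)
  next
    case False
    then have "\<sigma> a = a" "\<sigma> c = c" using aK cK by auto
    then show ?thesis
      using bil_cauchy_schwarz[OF Bf(1) Bf(2) X pd yX uX] yy uu by (simp add: a_def)
  qed
  ultimately show ?thesis using abs_le_if_square_le by (simp add: a_def)
qed

section \<open>Lattice vectors in a positive definite subspace\<close>

lemma integral_latticeE:
  assumes "integral_lattice K n B L"
  obtains m :: nat and gs where "\<forall>j<m. gs j \<in> Kvecs K n"
    "L = span_with (ring_of_integers K) n (gs ` {..<m})" "Kvecs K n = span_with K n (gs ` {..<m})"
  using assms unfolding integral_lattice_def by blast

lemma finite_lattice_vectors_of_norm:
  assumes adm: "admissible_form K n B" and X: "vec_subspace n X"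
    and pd: "\<forall>x\<in>X. x \<noteq> 0\<^sub>v n \<longrightarrow> bil B x x > 0"
    and LK: "L \<subseteq> Kvecs K n" and Lint: "\<forall>x\<in>L. \<forall>y\<in>L. bil B x y \<in> ring_of_integers K"
  shows "finite {y \<in> L \<inter> X. bil B y y = c}" (is "finite ?S")
proof (cases "c \<in> K")
  case False
  then have "?S = {}" using Lint unfolding ring_of_integers_def by auto
  then show ?thesis by (metis finite.emptyI)
next
  case True
  note Bf = admissible_formD[OF adm]
  obtain R where R: "\<forall>\<tau>. field_embedding K \<tau> \<longrightarrow> cmod (\<tau> c) \<le> R"
    using embeddings_bounded[OF True] by blast
  define F where "F = {a \<in> K. algebraic_int a \<and>
      (\<forall>\<tau>. field_embedding K \<tau> \<longrightarrow> cmod (\<tau> a) \<le> R)}"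
  have "finite F" unfolding F_def by (rule finite_algebraic_ints_bounded_conjugates)
  obtain U where U: "finite U" "U \<subseteq> ?S" and inj: "inj_on (\<lambda>y. restrict (bil B y) U) ?S"
    using obtain_finite_bil_separating_subset[OF Bf(1) X pd, of ?S] by blast
  have "bil B y u \<in> F" if y: "y \<in> ?S" and u: "u \<in> U" for y u
  proof -
    have uS: "u \<in> ?S" using u U(2) by blast
    have "bil B y u \<in> ring_of_integers K" using Lint y uS by blast
    moreover have "cmod (\<tau> (bil B y u)) \<le> R" if t: "field_embedding K \<tau>" for \<tau>
    proof -
      have "cmod (\<tau> (bil B y u)) \<le> cmod (\<tau> c)"
        by (rule embedding_bil_bound[OF adm X pd _ _ _ _ _ _ t]) (use y uS LK in auto)
      then show ?thesis using R t by force
    qed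
    ultimately show ?thesis unfolding F_def ring_of_integers_def by blast
  qed
  then have "(\<lambda>y. restrict (bil B y) U) ` ?S \<subseteq> PiE U (\<lambda>_. F)" by auto
  then have "finite ((\<lambda>y. restrict (bil B y) U) ` ?S)"
    by (rule finite_subset) (simp add: finite_PiE U(1) \<open>finite F\<close>)
  then show ?thesis using finite_imageD inj by blast
qed

lemma integral_lattice_subset_Kvecs:
  assumes "integral_lattice K n B L"
  shows "L \<subseteq> Kvecs K n"
proof
  obtain m :: nat and gs where gs: "\<forall>j<m. gs j \<in> Kvecs K n"
    and L_def: "L = span_with (ring_of_integers K) n (gs ` {..<m})"
    using integral_latticeE[OF assms] by blast
  fix y assume "y \<in> L"
  then obtain m' c xs where y: "y = lincomb_vec n m' c xs"
    and c: "\<forall>j<m'. c j \<in> ring_of_integers K" and xs: "\<forall>j<m'. xs j \<in> gs ` {..<m}"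
    unfolding L_def span_with_def by blast
  have "\<forall>j<m'. c j \<in> K" "\<forall>j<m'. xs j \<in> Kvecs K n"
    using c xs gs unfolding ring_of_integers_def by auto
  then show "y \<in> Kvecs K n"
    unfolding Kvecs_def y by (auto simp: lincomb_index Kvecs_index intro!: K_sum K_mult)
qed

lemma integral_lattice_multiple:
  assumes L: "integral_lattice K n B L" and x: "x \<in> Kvecs K n"
  obtains D :: int where "D > 0" "of_int D \<cdot>\<^sub>v x \<in> L"
proof -
  obtain m :: nat and gs where "\<forall>j<m. gs j \<in> Kvecs K n"
    and L_def: "L = span_with (ring_of_integers K) n (gs ` {..<m})"
    and K_def: "Kvecs K n = span_with K n (gs ` {..<m})"
    by (rule integral_latticeE[OF L])
  obtain m' c xs where x_def: "x = lincomb_vec n m' c xs" and c: "\<forall>j<m'. c j \<in> K"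
    and xs: "\<forall>j<m'. xs j \<in> gs ` {..<m}"
    using x unfolding K_def span_with_def by blast
  obtain D :: int where D: "D > 0" "\<forall>j<m'. algebraic_int (of_int D * c j)"
    using exists_common_denominator[OF c] by blast
  have "of_int D \<cdot>\<^sub>v x = lincomb_vec n m' (\<lambda>j. of_int D * c j) xs"
    unfolding x_def lincomb_smult ..
  moreover have "\<forall>j<m'. of_int D * c j \<in> ring_of_integers K"
    using D(2) c unfolding ring_of_integers_def by auto
  ultimately have "of_int D \<cdot>\<^sub>v x \<in> L" unfolding L_def span_with_def using xs by blast
  then show ?thesis using that D(1) by blast
qed

lemma isometry_orbit_finite:
  assumes adm: "admissible_form K n B" and X: "vec_subspace n X"
    and pd: "\<forall>x\<in>X. x \<noteq> 0\<^sub>v n \<longrightarrow> bil B x x > 0"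
    and LK: "L \<subseteq> Kvecs K n" and Lint: "\<forall>x\<in>L. \<forall>y\<in>L. bil B x y \<in> ring_of_integers K"
    and g: "g \<in> carrier_mat n n" and iso: "transpose_mat g * B * g = B"
    and gL: "\<And>v. v \<in> L \<Longrightarrow> g *\<^sub>v v \<in> L" and gX: "\<And>v. v \<in> X \<Longrightarrow> g *\<^sub>v v \<in> X"
    and w: "w \<in> L" "w \<in> X"
  shows "finite (range (\<lambda>k. ((\<lambda>v. g *\<^sub>v v) ^^ k) w))"
proof (rule finite_subset)
  have "((\<lambda>v. g *\<^sub>v v) ^^ k) w \<in> {y \<in> L \<inter> X. bil B y y = bil B w w}" for k
  proof (induction k)
    case (Suc k)
    then have "((\<lambda>v. g *\<^sub>v v) ^^ k) w \<in> carrier_vec n" using vec_subspaceD(1)[OF X] by auto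
    then show ?case
      using Suc gL gX bil_isometry[OF admissible_formD(1)[OF adm] g iso] by simp
  qed (use w in simp)
  then show "range (\<lambda>k. ((\<lambda>v. g *\<^sub>v v) ^^ k) w) \<subseteq> {y \<in> L \<inter> X. bil B y y = bil B w w}" by blast
qed (rule finite_lattice_vectors_of_norm[OF adm X pd LK Lint])

lemma Phi_stabilizer_fixes_rational_points:
  assumes adm: "admissible_form K n B" and L: "integral_lattice K n B L"
    and g: "g \<in> Phi K n B L" and neat: "neat_elem g"
    and X: "vec_subspace n X" and pd: "\<forall>x\<in>X. x \<noteq> 0\<^sub>v n \<longrightarrow> bil B x x > 0"
    and gX: "(\<lambda>v. g *\<^sub>v v) ` X = X" and x: "x \<in> X" "x \<in> Kvecs K n"
  shows "g *\<^sub>v x = x"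
proof -
  have gc: "g \<in> carrier_mat n n" and iso: "transpose_mat g * B * g = B"
    and gL: "\<And>v. v \<in> L \<Longrightarrow> g *\<^sub>v v \<in> L"
    using g unfolding Phi_def by auto
  have gX: "\<And>v. v \<in> X \<Longrightarrow> g *\<^sub>v v \<in> X" using gX by blast
  have Lint: "\<forall>x\<in>L. \<forall>y\<in>L. bil B x y \<in> ring_of_integers K"
    using L unfolding integral_lattice_def by (rule conjunct2)
  have xc: "x \<in> carrier_vec n" using x(2) by (rule Kvecs_carrier)
  obtain D :: int where D: "D > 0" "of_int D \<cdot>\<^sub>v x \<in> L"
    using integral_lattice_multiple[OF L x(2)] by blast
  define w where "w = real_of_int D \<cdot>\<^sub>v x"
  have wL: "w \<in> L" using D(2) by (simp add: w_def)
  have wX: "w \<in> X" unfolding w_def by (rule vec_subspaceD(3)[OF X x(1)])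
  have "finite (range (\<lambda>k. ((\<lambda>v. g *\<^sub>v v) ^^ k) w))"
    by (rule isometry_orbit_finite[OF adm X pd integral_lattice_subset_Kvecs[OF L] Lint gc iso gL gX wL wX])
  then obtain N where N: "N > 0" "((\<lambda>v. g *\<^sub>v v) ^^ N) w = w"
    using finite_orbit_imp_periodic[OF isometry_inj_on[OF admissible_formD(1)[OF adm] gc iso X pd] gX wX]
    by blast
  have "real_of_int D \<cdot>\<^sub>v ((\<lambda>v. g *\<^sub>v v) ^^ N) x = real_of_int D \<cdot>\<^sub>v x"
    using N(2) funpow_mult_mat_vec_smult[OF gc xc] unfolding w_def by simp
  then have "((\<lambda>v. g *\<^sub>v v) ^^ N) x = x"
    using D(1) by (intro smult_vec_left_cancel[OF _ funpow_mult_mat_vec_carrier[OF gc xc] xc]) auto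
  then show ?thesis by (rule neat_elem_periodic_point_fixed[OF gc neat xc N(1)])
qed

end

theorem lemma4p4:
  fixes K :: "real set" and n :: nat and B :: "real mat"
    and L :: "real vec set" and \<Gamma> :: "real mat set" and Xk :: "real vec set"
  assumes "totally_real K"
    and "admissible_form K n B"
    and "integral_lattice K n B L"
    and "is_subgroup_of n \<Gamma> (Phi K n B L)"
    and "neat \<Gamma>"
    and "K_subspace K n Xk"
    and "\<forall>x\<in>completion n Xk. x \<noteq> 0\<^sub>v n \<longrightarrow> bil B x x > 0"
  shows "stab \<Gamma> (completion n Xk) = pointwise_stab \<Gamma> (completion n Xk)"
proof -
  interpret totally_real_field K by unfold_locales (rule assms(1))
  have Xk: "Xk \<subseteq> Kvecs K n" using assms(6) unfolding K_subspace_def by blast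
  then have XkN: "Xk \<subseteq> carrier_vec n" unfolding Kvecs_def by blast
  have "g *\<^sub>v v = v" if g: "g \<in> stab \<Gamma> (completion n Xk)" and v: "v \<in> completion n Xk" for g v
  proof -
    have Phi: "g \<in> Phi K n B L" and neat: "neat_elem g"
      and gX: "(\<lambda>v. g *\<^sub>v v) ` completion n Xk = completion n Xk"
      using g assms(4,5) unfolding stab_def is_subgroup_of_def neat_def by auto
    have "g *\<^sub>v x = x" if "x \<in> Xk" for x
      using Phi_stabilizer_fixes_rational_points[OF assms(2,3) Phi neat vec_subspace_completion assms(7) gX]
        subset_completion[OF XkN] Xk that by blast
    moreover have "g \<in> carrier_mat n n" using Phi unfolding Phi_def by blast
    ultimately show ?thesis using mult_mat_vec_fixes_completion[OF _ XkN _ v] by blast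
  qed
  moreover have "(\<lambda>v. g *\<^sub>v v) ` completion n Xk = completion n Xk"
    if "\<forall>v\<in>completion n Xk. g *\<^sub>v v = v" for g
    using that by force
  ultimately show ?thesis unfolding stab_def pointwise_stab_def by blast
qed

end
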